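(* Let $\boldsymbol x\in\mathbb R^n\setminus\{\boldsymbol 0\}$, $\rho\in[0,1)$, $\boldsymbol g\in\mathcal G_\rho$, $\boldsymbol y_l=\mathrm{diag}(\boldsymbol g)\boldsymbol A_l\boldsymbol x$ for $l\in[p]$, and $\boldsymbol\xi_0=\frac1{mp}\sum_{l=1}^p\boldsymbol A_l^\top\boldsymbol y_l$, $\boldsymbol\gamma_0=\boldsymbol 1_m$. Given $\delta\in(0,1)$ and $t\ge1$, provided $mp\gtrsim\delta^{-2}(n+m)\log\frac n\delta$ and $n\gtrsim t\log(mp)$, with probability exceeding $1-Ce^{-c\delta^2mp}-(mp)^{-t}$ for some $C,c>0$ we have $\|\boldsymbol\xi_0-\boldsymbol x\|\le\delta\|\boldsymbol x\|$. Since also $\|\boldsymbol\gamma_0-\boldsymbol g\|_\infty\le\rho$, on this event $(\boldsymbol\xi_0,\boldsymbol\gamma_0)\in\mathcal D_{\kappa_0,\rho}$ with $\kappa_0=\sqrt{\delta^2+\rho^2}$.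
   Context: Random model: $X$ is a centred real random variable with $\mathbb EX^2=1$ and sub-Gaussian norm $\alpha=\|X\|_{\psi_2}:=\sup_{r\ge1}r^{-1/2}(\mathbb E|X|^r)^{1/r}<\infty$; $\boldsymbol a\in\mathbb R^n$ has i.i.d. entries distributed as $X$; $\boldsymbol a_{i,l}$ ($i\in[m]$, $l\in[p]$) are i.i.d. copies of $\boldsymbol a$ and $\boldsymbol A_l\in\mathbb R^{m\times n}$ has rows $\boldsymbol a_{1,l}^\top,\dots,\boldsymbol a_{m,l}^\top$. Standing (Bernoulli restriction) hypothesis: if $\mathbb EX^4=1$, then $n>1$ and $\|\boldsymbol x/\|\boldsymbol x\|\|_4^4\le1-c_0/n$ for a fixed constant $c_0>0$. Notation: $A\gtrsim B$ means $A\ge C'B$ for a sufficiently large constant $C'>0$ depending only on $\alpha$ (and $c_0$); $C,c$ denote such constants. $\boldsymbol 1_m^\perp=\{\boldsymbol v:\boldsymbol 1_m^\top\boldsymbol v=0\}$; $\mathcal G_\rho=\{\boldsymbol 1_m+\boldsymbol e:\boldsymbol e\in\boldsymbol 1_m^\perp,\|\boldsymbol e\|_\infty\le\rho\}$; $\Delta(\boldsymbol\xi,\boldsymbol\gamma)=\|\boldsymbol\xi-\boldsymbol x\|^2+\frac{\|\boldsymbol x\|^2}m\|\boldsymbol\gamma-\boldsymbol g\|^2$; $\mathcal D_{\kappa,\rho}=\{(\boldsymbol\xi,\boldsymbol\gamma)\in\mathbb R^n\times\mathcal G_\rho:\Delta(\boldsymbol\xi,\boldsymbol\gamma)\le\kappa^2\|\boldsymbol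 x\|^2\}$. *)

theory Defs
  imports "HOL-Probability.Probability"
begin

text \<open>Vectors in R^k are represented as functions nat => real, only indices below k matter.\<close>

definition enorm :: "nat \<Rightarrow> (nat \<Rightarrow> real) \<Rightarrow> real" where
  "enorm k v = sqrt (\<Sum>j<k. (v j)\<^sup>2)"

definition infnorm :: "nat \<Rightarrow> (nat \<Rightarrow> real) \<Rightarrow> real" where
  "infnorm k v = Max ({0} \<union> (\<lambda>i. \<bar>v i\<bar>) ` {..<k})"

definition norm4_pow4 :: "nat \<Rightarrow> (nat \<Rightarrow> real) \<Rightarrow> real" where
  "norm4_pow4 k v = (\<Sum>j<k. (v j) ^ 4)"

definition subgauss_norm_eq :: "real measure \<Rightarrow> real \<Rightarrow> bool" where
  "subgauss_norm_eq D \<alpha> \<longleftrightarrow>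
     (\<forall>r\<ge>1. integrable D (\<lambda>u. \<bar>u\<bar> powr r)) \<and>
     bdd_above ((\<lambda>r. r powr (-1/2) * (\<integral>u. \<bar>u\<bar> powr r \<partial>D) powr (1/r)) ` {1..}) \<and>
     (SUP r\<in>{1..}. r powr (-1/2) * (\<integral>u. \<bar>u\<bar> powr r \<partial>D) powr (1/r)) = \<alpha>"

definition Gset :: "nat \<Rightarrow> real \<Rightarrow> (nat \<Rightarrow> real) set" where
  "Gset m \<rho> = {\<gamma>. (\<Sum>i<m. \<gamma> i - 1) = 0 \<and> (\<forall>i<m. \<bar>\<gamma> i - 1\<bar> \<le> \<rho>)}"

definition Delta :: "nat \<Rightarrow> nat \<Rightarrow> (nat \<Rightarrow> real) \<Rightarrow> (nat \<Rightarrow> real)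
      \<Rightarrow> (nat \<Rightarrow> real) \<Rightarrow> (nat \<Rightarrow> real) \<Rightarrow> real" where
  "Delta n m x g \<xi> \<gamma> = (enorm n (\<lambda>j. \<xi> j - x j))\<^sup>2
      + (enorm n x)\<^sup>2 / real m * (enorm m (\<lambda>i. \<gamma> i - g i))\<^sup>2"

definition Dset :: "nat \<Rightarrow> nat \<Rightarrow> (nat \<Rightarrow> real) \<Rightarrow> (nat \<Rightarrow> real) \<Rightarrow> real \<Rightarrow> real
      \<Rightarrow> ((nat \<Rightarrow> real) \<times> (nat \<Rightarrow> real)) set" where
  "Dset n m x g \<kappa> \<rho> = {(\<xi>, \<gamma>). \<gamma> \<in> Gset m \<rho> \<and> Delta n m x g \<xi> \<gamma> \<le> \<kappa>\<^sup>2 * (enorm n x)\<^sup>2}"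

text \<open>Sample space: omega (i,l,j) is the (i,j) entry of A_l, i<m, l<p, j<n, i.i.d. with law D.\<close>
definition sample_space :: "nat \<Rightarrow> nat \<Rightarrow> nat \<Rightarrow> real measure \<Rightarrow> (nat \<times> nat \<times> nat \<Rightarrow> real) measure" where
  "sample_space m p n D = PiM ({..<m} \<times> {..<p} \<times> {..<n}) (\<lambda>_. D)"

definition Amul :: "nat \<Rightarrow> (nat \<times> nat \<times> nat \<Rightarrow> real) \<Rightarrow> nat \<Rightarrow> (nat \<Rightarrow> real) \<Rightarrow> nat \<Rightarrow> real" where
  "Amul n \<omega> l x i = (\<Sum>j<n. \<omega> (i, l, j) * x j)"

definition meas_y :: "nat \<Rightarrow> (nat \<times> nat \<times> nat \<Rightarrow> real) \<Rightarrow> (nat \<Rightarrow> real) \<Rightarrow> (nat \<Rightarrow> real) \<Rightarrow> nat \<Rightarrow> nat \<Rightarrow> real" where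
  "meas_y n \<omega> g x l i = g i * Amul n \<omega> l x i"

definition xi0 :: "nat \<Rightarrow> nat \<Rightarrow> nat \<Rightarrow> (nat \<times> nat \<times> nat \<Rightarrow> real) \<Rightarrow> (nat \<Rightarrow> real) \<Rightarrow> (nat \<Rightarrow> real) \<Rightarrow> nat \<Rightarrow> real" where
  "xi0 m p n \<omega> g x j = (1 / (real m * real p)) * (\<Sum>l<p. \<Sum>i<m. \<omega> (i, l, j) * meas_y n \<omega> g x l i)"

end

theory Submission
  imports Defs
begin

text \<open>Since \<open>\<Sum>\<^sub>i g\<^sub>i = m\<close>, the error \<open>mp (\<xi>\<^sub>0 - x) / \<parallel>x\<parallel>\<close> is \<open>V = \<Sum>\<^sub>i\<^sub>,\<^sub>l g\<^sub>i (a\<^sub>i\<^sub>,\<^sub>l a\<^sub>i\<^sub>,\<^sub>l\<^sup>T x\<^sub>1 - x\<^sub>1)\<close> with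
  \<open>x\<^sub>1 = x / \<parallel>x\<parallel>\<close>. For a fixed \<open>u\<close> in the unit ball, \<open>\<langle>u, V\<rangle>\<close> is a sum of \<open>mp\<close> independent centred
  products of two sub-Gaussian linear forms, scaled by \<open>\<bar>g\<^sub>i\<bar> \<le> 2\<close>. Such a product is sub-exponential:
  its moment generating function is at most \<open>exp (K l\<^sup>2)\<close> for \<open>\<bar>l\<bar> \<le> \<epsilon>\<close>, obtained from bounds on
  \<open>E exp (s Z\<^sup>2)\<close> for a unit linear form \<open>Z\<close>, which in turn come from the moment growth
  \<open>E \<bar>X\<bar>\<^sup>r \<le> (\<alpha> \<surd>r)\<^sup>r\<close>. A Chernoff bound gives \<open>P(\<langle>u, V\<rangle> \<ge> \<delta> mp / 2) \<le> exp (-c \<delta>\<^sup>2 mp)\<close>, and a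
  union bound over a \<open>1/2\<close>-norming grid of at most \<open>exp (4 n ln n)\<close> points, affordable because
  \<open>mp \<gtrsim> \<delta>\<^sup>-\<^sup>2 n ln (n/\<delta>)\<close>, yields \<open>\<parallel>V\<parallel> \<le> \<delta> mp\<close>. The membership in \<open>D\<^sub>\<kappa>\<^sub>0\<^sub>,\<^sub>\<rho>\<close> is then
  deterministic, as \<open>\<parallel>1 - g\<parallel>\<^sup>2 \<le> m \<rho>\<^sup>2\<close>.\<close>

lemma integrable_bounded_by_series:
  fixes M :: "'a measure" and h :: "nat \<Rightarrow> 'a \<Rightarrow> real" and b :: "nat \<Rightarrow> real"
  assumes sums: "\<And>x. x \<in> space M \<Longrightarrow> (\<lambda>r. h r x) sums f x"
    and int: "\<And>r. integrable M (h r)" and nonneg: "\<And>r x. x \<in> space M \<Longrightarrow> 0 \<le> h r x"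
    and bound: "\<And>r. (\<integral>x. h r x \<partial>M) \<le> b r" and "summable b"
    and "f \<in> borel_measurable M"
  shows "integrable M f \<and> (\<integral>x. f x \<partial>M) \<le> suminf b"
proof -
  have b_nonneg: "0 \<le> b r" for r
    using bound[of r] integral_nonneg_AE[of "h r" M] nonneg by (meson AE_I2 order_trans)
  have f_nonneg: "0 \<le> f x" if "x \<in> space M" for x
    using sums_le[OF _ sums_zero sums[OF that]] nonneg[OF that] by blast
  have "(\<integral>\<^sup>+ x. ennreal (f x) \<partial>M) = (\<integral>\<^sup>+ x. (\<Sum>r. ennreal (h r x)) \<partial>M)"
    by (rule nn_integral_cong) (rule suminf_ennreal_eq[symmetric, OF nonneg sums], assumption+)
  also have "\<dots> = (\<Sum>r. \<integral>\<^sup>+ x. ennreal (h r x) \<partial>M)"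
    by (rule nn_integral_suminf) (use int in measurable)
  also have "\<dots> = (\<Sum>r. ennreal (\<integral>x. h r x \<partial>M))"
    by (rule suminf_cong) (rule nn_integral_eq_integral[OF int], simp add: nonneg)
  also have "\<dots> \<le> (\<Sum>r. ennreal (b r))"
    by (intro suminf_le summableI ennreal_leI bound)
  also have "\<dots> = ennreal (suminf b)"
    by (rule suminf_ennreal2[OF b_nonneg \<open>summable b\<close>])
  finally have le: "(\<integral>\<^sup>+ x. ennreal (f x) \<partial>M) \<le> ennreal (suminf b)" .
  have f_int: "integrable M f"
    by (rule integrableI_nonneg[OF \<open>f \<in> borel_measurable M\<close> AE_I2[OF f_nonneg] le_less_trans[OF le]]) simp_all
  have "ennreal (\<integral>x. f x \<partial>M) \<le> ennreal (suminf b)"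
    using le nn_integral_eq_integral[OF f_int] f_nonneg by simp
  then have "(\<integral>x. f x \<partial>M) \<le> suminf b"
    using suminf_nonneg[OF \<open>summable b\<close> b_nonneg] by (subst (asm) ennreal_le_iff) auto
  with f_int show ?thesis by simp
qed

lemma fact_ge_power_div_exp: "(real r / exp 1) ^ r \<le> fact r"
proof (induction r)
  case 0 then show ?case by simp
next
  case (Suc r)
  show ?case
  proof (cases "r = 0")
    case True then show ?thesis using exp_ge_add_one_self[of 1] by (simp add: field_simps)
  next
    case False
    have "(1 + 1 / real r) ^ r \<le> exp (1 / real r) ^ r"
      by (intro power_mono) (auto simp: add.commute)
    also have "\<dots> = exp 1" using False by (simp flip: exp_of_nat_mult)
    finally have e: "(1 + 1 / real r) ^ r \<le> exp 1" .
    have "real (Suc r) / exp 1 = (1 + 1 / real r) * (real r / exp 1)"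
      using False by (simp add: field_simps)
    then have "(real (Suc r) / exp 1) ^ Suc r
        = (real (Suc r) / exp 1) * ((1 + 1 / real r) ^ r * (real r / exp 1) ^ r)"
      by (simp only: power_Suc power_mult_distrib)
    also have "\<dots> \<le> (real (Suc r) / exp 1) * (exp 1 * fact r)"
      by (intro mult_left_mono mult_mono e Suc.IH) auto
    also have "\<dots> = fact (Suc r)" by simp
    finally show ?thesis .
  qed
qed

lemma le_exp_square_div_4: "(w::real) \<le> exp (w\<^sup>2 / 4)"
proof -
  have "w \<le> 1 + w\<^sup>2 / 4"
    using sum_power2_ge_zero[of "w/2 - 1" 0] by (simp add: power2_eq_square field_simps)
  also have "\<dots> \<le> exp (w\<^sup>2 / 4)" by (rule exp_ge_add_one_self)
  finally show ?thesis .
qed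

lemma power_sqrt_div_fact_le:
  assumes "0 \<le> (y::real)"
  shows "y ^ r * sqrt (real r) ^ r / fact r \<le> exp ((exp 1 * y)\<^sup>2) * (1/2) ^ r"
proof (cases "r = 0")
  case True then show ?thesis by simp
next
  case False
  let ?s = "sqrt (real r)"
  have s_pos: "?s > 0" using False by simp
  have "y ^ r * ?s ^ r / fact r \<le> y ^ r * ?s ^ r / (real r / exp 1) ^ r"
    using False assms by (intro divide_left_mono fact_ge_power_div_exp mult_nonneg_nonneg) auto
  also have "\<dots> = (y * ?s / (real r / exp 1)) ^ r"
    by (simp only: power_mult_distrib power_divide)
  also have "y * ?s / (real r / exp 1) = exp 1 * y / ?s"
    using s_pos real_sqrt_mult_self[of "real r"] by (simp add: field_simps)
  finally have first: "y ^ r * ?s ^ r / fact r \<le> (exp 1 * y / ?s) ^ r" .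
  define w where "w = 2 * exp 1 * y / ?s"
  have "(exp 1 * y / ?s) ^ r = w ^ r * (1/2) ^ r"
    by (simp add: w_def flip: power_mult_distrib)
  also have "w ^ r \<le> exp (w\<^sup>2 / 4) ^ r"
    using assms s_pos by (intro power_mono le_exp_square_div_4) (simp add: w_def)
  also have "exp (w\<^sup>2 / 4) ^ r = exp ((exp 1 * y)\<^sup>2)"
  proof -
    have "real r * (w\<^sup>2 / 4) = (exp 1 * y)\<^sup>2"
      using False by (simp add: w_def power_divide power_mult_distrib)
    then show ?thesis by (simp flip: exp_of_nat_mult)
  qed
  finally show ?thesis using first by (simp add: mult_right_mono)
qed

lemma power_div_fact_le_exp:
  assumes "0 \<le> (x::real)"
  shows "x ^ n / fact n \<le> exp x"
proof -
  have "(\<lambda>m. x ^ m / fact m) sums exp x"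
    using exp_converges[of x] by (simp add: divide_inverse mult.commute)
  then show ?thesis
    using sum_le_suminf[of "\<lambda>m. x ^ m / fact m" "{n}"] assms by (simp add: sums_iff)
qed

lemma fact_double_le: "(fact (2*q) :: real) \<le> 4 ^ q * (fact q)\<^sup>2"
proof -
  have "fact q * fact (2*q - q) * ((2*q) choose q) = (fact (2*q) :: nat)"
    by (rule binomial_fact_lemma) simp
  then have "fact (2*q) = (fact q)\<^sup>2 * ((2*q) choose q)"
    by (simp add: power2_eq_square mult_ac)
  also have "\<dots> \<le> (fact q)\<^sup>2 * 4 ^ q"
    using binomial_le_pow2[of "2*q" q] by (simp add: power_mult)
  finally have "real (fact (2*q)) \<le> real ((fact q)\<^sup>2 * 4 ^ q)"
    by (simp only: of_nat_le_iff)
  then show ?thesis by (simp add: mult_ac)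
qed

lemma exp_le_quadratic_Taylor: "exp (w::real) \<le> 1 + w + w\<^sup>2 / 2 * exp \<bar>w\<bar>"
proof -
  obtain t where t: "\<bar>t\<bar> \<le> \<bar>w\<bar>" "exp w = (\<Sum>m<2. w ^ m / fact m) + exp t / fact 2 * w ^ 2"
    using Maclaurin_exp_le[of w 2] by blast
  have "exp t / 2 * w\<^sup>2 \<le> exp \<bar>w\<bar> / 2 * w\<^sup>2"
    using t(1) by (intro mult_right_mono) auto
  then show ?thesis using t(2) by (simp add: numeral_2_eq_2 mult_ac)
qed

lemma (in prob_space) centred_mgf_le:
  fixes W :: "'a \<Rightarrow> real"
  assumes "integrable M W" and "expectation W = 0"
    and "integrable M (\<lambda>\<omega>. exp (l * W \<omega>))"
    and "integrable M (\<lambda>\<omega>. (W \<omega>)\<^sup>2 * exp (\<bar>l\<bar> * \<bar>W \<omega>\<bar>))"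
    and "expectation (\<lambda>\<omega>. (W \<omega>)\<^sup>2 * exp (\<bar>l\<bar> * \<bar>W \<omega>\<bar>)) \<le> B"
  shows "expectation (\<lambda>\<omega>. exp (l * W \<omega>)) \<le> 1 + l\<^sup>2 / 2 * B"
proof -
  have Taylor: "exp (l * W \<omega>) \<le> 1 + l * W \<omega> + l\<^sup>2 / 2 * ((W \<omega>)\<^sup>2 * exp (\<bar>l\<bar> * \<bar>W \<omega>\<bar>))" for \<omega>
    using exp_le_quadratic_Taylor[of "l * W \<omega>"] by (simp add: power_mult_distrib abs_mult mult_ac)
  have "expectation (\<lambda>\<omega>. exp (l * W \<omega>))
      \<le> expectation (\<lambda>\<omega>. 1 + l * W \<omega> + l\<^sup>2 / 2 * ((W \<omega>)\<^sup>2 * exp (\<bar>l\<bar> * \<bar>W \<omega>\<bar>)))"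
    using assms(1,4) by (intro integral_mono[OF assms(3)] Taylor) auto
  also have "\<dots> = 1 + l * expectation W + l\<^sup>2 / 2 * expectation (\<lambda>\<omega>. (W \<omega>)\<^sup>2 * exp (\<bar>l\<bar> * \<bar>W \<omega>\<bar>))"
    using assms(1,4) by (simp add: prob_space)
  also have "\<dots> \<le> 1 + l\<^sup>2 / 2 * B"
    using assms(2,5) by (simp add: mult_left_mono)
  finally show ?thesis .
qed

lemma square_mul_exp_le:
  fixes \<alpha> l u :: real
  assumes "\<alpha> > 0" and "\<bar>l\<bar> \<le> 1 / \<alpha>"
  shows "u\<^sup>2 * exp (\<bar>l\<bar> * \<bar>u\<bar>) \<le> 2 * \<alpha>\<^sup>2 * exp (2 / \<alpha> * \<bar>u\<bar>)"
proof -
  have "0 \<le> \<bar>u\<bar> / \<alpha>" using assms(1) by simp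
  then have "(\<bar>u\<bar> / \<alpha>)\<^sup>2 / 2 \<le> exp (\<bar>u\<bar> / \<alpha>)"
    using exp_lower_Taylor_quadratic[of "\<bar>u\<bar> / \<alpha>"] by linarith
  then have "u\<^sup>2 \<le> 2 * \<alpha>\<^sup>2 * exp (\<bar>u\<bar> / \<alpha>)"
    using assms(1) by (simp add: field_simps power2_eq_square)
  moreover have "exp (\<bar>l\<bar> * \<bar>u\<bar>) \<le> exp (\<bar>u\<bar> / \<alpha>)"
    using mult_right_mono[OF assms(2), of "\<bar>u\<bar>"] by simp
  ultimately have "u\<^sup>2 * exp (\<bar>l\<bar> * \<bar>u\<bar>) \<le> 2 * \<alpha>\<^sup>2 * exp (\<bar>u\<bar> / \<alpha>) * exp (\<bar>u\<bar> / \<alpha>)"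
    by (intro mult_mono) auto
  also have "\<dots> = 2 * \<alpha>\<^sup>2 * exp (2 / \<alpha> * \<bar>u\<bar>)"
    by (simp add: mult.assoc flip: exp_add)
  finally show ?thesis .
qed

lemma (in prob_space) mgf_le_of_exp_abs_dominated:
  fixes W G :: "'a \<Rightarrow> real"
  assumes W: "integrable M W" "expectation W = 0"
    and G: "integrable M G" "expectation G \<le> B"
    and dominated: "\<And>\<omega>. exp (2 * r * \<bar>W \<omega>\<bar>) \<le> G \<omega>"
    and r: "0 < r" "\<bar>l\<bar> \<le> r"
  shows "integrable M (\<lambda>\<omega>. exp (l * W \<omega>)) \<and> expectation (\<lambda>\<omega>. exp (l * W \<omega>)) \<le> 1 + l\<^sup>2 * B / r\<^sup>2"
proof -
  have [measurable]: "W \<in> borel_measurable M" using W(1) by (rule borel_measurable_integrable)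
  have exp_le: "exp (l * W \<omega>) \<le> G \<omega>" for \<omega>
  proof -
    have "l * W \<omega> \<le> r * \<bar>W \<omega>\<bar>"
      using mult_right_mono[OF r(2) abs_ge_zero[of "W \<omega>"]] abs_ge_self[of "l * W \<omega>"]
      by (simp add: abs_mult)
    also have "\<dots> \<le> 2 * r * \<bar>W \<omega>\<bar>" using r by (simp add: mult_right_mono)
    finally show ?thesis using dominated[of \<omega>] by (meson exp_le_cancel_iff order_trans)
  qed
  have square_le: "(W \<omega>)\<^sup>2 * exp (\<bar>l\<bar> * \<bar>W \<omega>\<bar>) \<le> 2 / r\<^sup>2 * G \<omega>" for \<omega>
  proof -
    have "(W \<omega>)\<^sup>2 * exp (\<bar>l\<bar> * \<bar>W \<omega>\<bar>) \<le> 2 * (1 / r)\<^sup>2 * exp (2 / (1 / r) * \<bar>W \<omega>\<bar>)"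
      using r by (intro square_mul_exp_le) auto
    also have "\<dots> \<le> 2 / r\<^sup>2 * G \<omega>"
      using dominated[of \<omega>] by (simp add: power_divide divide_right_mono mult.commute)
    finally show ?thesis .
  qed
  have G_nonneg: "0 \<le> G \<omega>" for \<omega> using dominated[of \<omega>] exp_ge_zero order_trans by blast
  have int_exp: "integrable M (\<lambda>\<omega>. exp (l * W \<omega>))"
    by (rule Bochner_Integration.integrable_bound[OF G(1)]) (use exp_le G_nonneg in \<open>auto intro!: AE_I2\<close>)
  have int_sq: "integrable M (\<lambda>\<omega>. (W \<omega>)\<^sup>2 * exp (\<bar>l\<bar> * \<bar>W \<omega>\<bar>))"
    by (rule Bochner_Integration.integrable_bound[of _ "\<lambda>\<omega>. 2 / r\<^sup>2 * G \<omega>"])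
       (use G(1) square_le G_nonneg in \<open>auto intro!: AE_I2\<close>)
  have "expectation (\<lambda>\<omega>. (W \<omega>)\<^sup>2 * exp (\<bar>l\<bar> * \<bar>W \<omega>\<bar>)) \<le> expectation (\<lambda>\<omega>. 2 / r\<^sup>2 * G \<omega>)"
    using int_sq G(1) by (intro integral_mono square_le) auto
  also have "\<dots> = 2 / r\<^sup>2 * expectation G" by simp
  also have "\<dots> \<le> 2 / r\<^sup>2 * B" using G(2) by (intro mult_left_mono) auto
  finally have "expectation (\<lambda>\<omega>. exp (l * W \<omega>)) \<le> 1 + l\<^sup>2 / 2 * (2 / r\<^sup>2 * B)"
    by (intro centred_mgf_le W int_exp int_sq)
  with int_exp show ?thesis by simp
qed

lemma (in prob_space) prob_ge_le_mgf:
  assumes "S \<in> borel_measurable M" and "l > 0"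
    and "integrable M (\<lambda>\<omega>. exp (l * S \<omega>))"
  shows "prob {\<omega> \<in> space M. t \<le> S \<omega>} \<le> expectation (\<lambda>\<omega>. exp (l * S \<omega>)) / exp (l * t)"
proof -
  have "{\<omega> \<in> space M. t \<le> S \<omega>} = {\<omega> \<in> space M. exp (l * t) \<le> exp (l * S \<omega>)}"
    using \<open>l > 0\<close> by auto
  also have "prob \<dots> \<le> expectation (\<lambda>\<omega>. exp (l * S \<omega>)) / exp (l * t)"
    by (rule integral_Markov_inequality_measure[OF assms(3), where A = "space M"]) auto
  finally show ?thesis .
qed

lemma indep_vars_PiM_components:
  fixes D :: "'a measure" and I :: "'i set"
  assumes "prob_space D" and "I \<noteq> {}"
  shows "prob_space.indep_vars (PiM I (\<lambda>_. D)) (\<lambda>_. D) (\<lambda>i \<omega>. \<omega> i) I"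
proof -
  interpret P: product_prob_space "\<lambda>_. D" I
    by (simp add: assms(1) product_prob_space_def product_prob_space_axioms_def
        product_sigma_finite_def prob_space_imp_sigma_finite)
  have PS: "prob_space (PiM I (\<lambda>_. D))" by (rule prob_space_PiM) (simp add: assms(1))
  obtain c where c: "c \<in> space D" using prob_space.not_empty[OF assms(1)] by blast
  \<comment> \<open>Components outside \<open>I\<close> are junk; moving them into \<open>space D\<close> makes every variable measurable.\<close>
  define X where "X = (\<lambda>i (\<omega>::'i \<Rightarrow> 'a). if i \<in> I then \<omega> i else c)"
  have "prob_space.indep_vars (PiM I (\<lambda>_. D)) (\<lambda>_. D) X I"
  proof (subst prob_space.indep_vars_iff_distr_eq_PiM[OF PS assms(2)])
    show "X i \<in> measurable (PiM I (\<lambda>_. D)) D" for i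
      using c by (cases "i \<in> I") (auto simp: X_def)
    have "distr (PiM I (\<lambda>_. D)) (PiM I (\<lambda>_. D)) (\<lambda>x. \<lambda>i\<in>I. X i x)
        = distr (PiM I (\<lambda>_. D)) (PiM I (\<lambda>_. D)) (\<lambda>x. x)"
      by (rule distr_cong) (auto simp: X_def space_PiM PiE_def extensional_def fun_eq_iff)
    also have "\<dots> = PiM I (\<lambda>i. distr (PiM I (\<lambda>_. D)) D (X i))"
      by (auto intro!: PiM_cong simp: P.PiM_component X_def cong: distr_cong)
    finally show "distr (PiM I (\<lambda>_. D)) (PiM I (\<lambda>_. D)) (\<lambda>x. \<lambda>i\<in>I. X i x)
        = PiM I (\<lambda>i. distr (PiM I (\<lambda>_. D)) D (X i))" .
  qed
  then show ?thesis
    by (rule prob_space.indep_vars_cong[OF PS, THEN iffD1, rotated -1]) (auto simp: X_def)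
qed

lemma PiM_integral_prod_blocks:
  fixes F :: "'l \<Rightarrow> ('i \<Rightarrow> real) \<Rightarrow> real"
  assumes "prob_space D" and "I \<noteq> {}" and "finite L"
    and "\<And>k. k \<in> L \<Longrightarrow> K k \<subseteq> I" and "disjoint_family_on K L"
    and "\<And>k. k \<in> L \<Longrightarrow> F k \<in> borel_measurable (PiM (K k) (\<lambda>_. D))"
    and "\<And>k. k \<in> L \<Longrightarrow> integrable (PiM I (\<lambda>_. D)) (\<lambda>\<omega>. F k (restrict \<omega> (K k)))"
  shows "integrable (PiM I (\<lambda>_. D)) (\<lambda>\<omega>. \<Prod>k\<in>L. F k (restrict \<omega> (K k)))"
    and "(\<integral>\<omega>. (\<Prod>k\<in>L. F k (restrict \<omega> (K k))) \<partial>PiM I (\<lambda>_. D))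
       = (\<Prod>k\<in>L. \<integral>\<omega>. F k (restrict \<omega> (K k)) \<partial>PiM I (\<lambda>_. D))"
proof -
  interpret PM: prob_space "PiM I (\<lambda>_. D)" by (rule prob_space_PiM) (simp add: assms(1))
  have "PM.indep_vars (\<lambda>k. PiM (K k) (\<lambda>_. D)) (\<lambda>k \<omega>. restrict (\<lambda>i. \<omega> i) (K k)) L"
    by (rule PM.indep_vars_restrict[OF indep_vars_PiM_components[OF assms(1,2)] assms(4,5)])
  then have indep: "PM.indep_vars (\<lambda>_. borel) (\<lambda>k \<omega>. F k (restrict \<omega> (K k))) L"
    by (rule PM.indep_vars_compose2) (rule assms(6))
  show "integrable (PiM I (\<lambda>_. D)) (\<lambda>\<omega>. \<Prod>k\<in>L. F k (restrict \<omega> (K k)))"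
    using PM.indep_vars_integrable[OF assms(3) indep] assms(7) by simp
  show "(\<integral>\<omega>. (\<Prod>k\<in>L. F k (restrict \<omega> (K k))) \<partial>PiM I (\<lambda>_. D))
      = (\<Prod>k\<in>L. \<integral>\<omega>. F k (restrict \<omega> (K k)) \<partial>PiM I (\<lambda>_. D))"
    using PM.indep_vars_lebesgue_integral[OF assms(3) indep] assms(7) by simp
qed

text \<open>Constants of the moment generating function bounds, as functions of the sub-Gaussian norm:
  \<open>E exp(l X) \<le> exp (mgf_const \<alpha> * l\<^sup>2)\<close>; \<open>E exp(s Z\<^sup>2) \<le> 3\<close> for a unit linear form \<open>Z\<close> and
  \<open>s \<le> sq_mgf_radius \<alpha>\<close>; the centred product of two unit linear forms, scaled by at most 2, has
  \<open>E exp(l W) \<le> exp (bilin_mgf_const \<alpha> * l\<^sup>2)\<close> for \<open>\<bar>l\<bar> \<le> bilin_mgf_radius \<alpha>\<close>.\<close>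

definition mgf_const :: "real \<Rightarrow> real" where
  "mgf_const \<alpha> = 2 * \<alpha>\<^sup>2 * exp (4 * (exp 1)\<^sup>2)"

definition sq_mgf_radius :: "real \<Rightarrow> real" where
  "sq_mgf_radius \<alpha> = 1 / (16 * mgf_const \<alpha> * exp 1)"

definition bilin_mgf_radius :: "real \<Rightarrow> real" where
  "bilin_mgf_radius \<alpha> = sq_mgf_radius \<alpha> / 4"

definition bilin_mgf_const :: "real \<Rightarrow> real" where
  "bilin_mgf_const \<alpha> = 3 * exp (sq_mgf_radius \<alpha>) / (bilin_mgf_radius \<alpha>)\<^sup>2"

lemma mgf_const_pos: "\<alpha> > 0 \<Longrightarrow> mgf_const \<alpha> > 0"
  by (simp add: mgf_const_def)

lemma sq_mgf_radius_pos: "\<alpha> > 0 \<Longrightarrow> sq_mgf_radius \<alpha> > 0"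
  using mgf_const_pos[of \<alpha>] by (simp add: sq_mgf_radius_def)

lemma bilin_mgf_radius_pos: "\<alpha> > 0 \<Longrightarrow> bilin_mgf_radius \<alpha> > 0"
  using sq_mgf_radius_pos[of \<alpha>] by (simp add: bilin_mgf_radius_def)

lemma bilin_mgf_const_pos: "\<alpha> > 0 \<Longrightarrow> bilin_mgf_const \<alpha> > 0"
  using bilin_mgf_radius_pos[of \<alpha>] by (simp add: bilin_mgf_const_def)

locale subgaussian_law =
  fixes D :: "real measure" and \<alpha> :: real
  assumes prob_space_D: "prob_space D" and sets_D: "sets D = sets borel" and \<alpha>_pos: "\<alpha> > 0"
    and integrable_id: "integrable D (\<lambda>u. u)" and mean_zero: "(\<integral>u. u \<partial>D) = 0"
    and integrable_square: "integrable D (\<lambda>u. u\<^sup>2)" and second_moment: "(\<integral>u. u\<^sup>2 \<partial>D) = 1"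
    and subgauss_norm: "subgauss_norm_eq D \<alpha>"
begin

interpretation prob_space D by (rule prob_space_D)

lemma borel_measurable_D: "f \<in> borel_measurable borel \<Longrightarrow> f \<in> borel_measurable D"
  using measurable_cong_sets[OF sets_D refl] by blast

lemma abs_moment_le:
  "integrable D (\<lambda>u. \<bar>u\<bar> ^ r) \<and> (\<integral>u. \<bar>u\<bar> ^ r \<partial>D) \<le> (\<alpha> * sqrt (real r)) ^ r"
proof (cases "r = 0")
  case True then show ?thesis by (simp add: prob_space)
next
  case False
  have powr_eq: "(\<lambda>u. \<bar>u\<bar> powr real r) = (\<lambda>u::real. \<bar>u\<bar> ^ r)"
    using False by (intro ext) (simp add: powr_realpow')
  have int: "integrable D (\<lambda>u. \<bar>u\<bar> ^ r)"
    using subgauss_norm False unfolding subgauss_norm_eq_def powr_eq[symmetric] by auto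
  define E where "E = (\<integral>u. \<bar>u\<bar> ^ r \<partial>D)"
  have E_nonneg: "0 \<le> E" unfolding E_def by (rule integral_nonneg_AE) simp
  have "real r powr (-1/2) * E powr (1 / real r)
      = (\<lambda>r. r powr (-1/2) * (\<integral>u. \<bar>u\<bar> powr r \<partial>D) powr (1/r)) (real r)"
    by (simp add: E_def powr_eq)
  also have "\<dots> \<le> (SUP r\<in>{1..}. r powr (-1/2) * (\<integral>u. \<bar>u\<bar> powr r \<partial>D) powr (1/r))"
    using subgauss_norm False unfolding subgauss_norm_eq_def by (intro cSUP_upper) auto
  also have "\<dots> = \<alpha>" using subgauss_norm unfolding subgauss_norm_eq_def by auto
  finally have "E powr (1 / real r) \<le> \<alpha> * sqrt (real r)"
    using False by (simp add: powr_minus powr_half_sqrt field_simps)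
  then have "(E powr (1 / real r)) ^ r \<le> (\<alpha> * sqrt (real r)) ^ r"
    by (intro power_mono) auto
  moreover have "(E powr (1 / real r)) ^ r = E"
    using False E_nonneg by (cases "E = 0") (simp_all add: powr_power)
  ultimately show ?thesis using int E_def by simp
qed

lemma mgf_abs_le:
  assumes "0 \<le> \<mu>"
  shows "integrable D (\<lambda>u. exp (\<mu> * \<bar>u\<bar>)) \<and> (\<integral>u. exp (\<mu> * \<bar>u\<bar>) \<partial>D) \<le> 2 * exp ((exp 1 * \<alpha> * \<mu>)\<^sup>2)"
proof -
  define E where "E = exp ((exp 1 * (\<alpha> * \<mu>))\<^sup>2)"
  define b where "b r = E * (1/2) ^ r" for r :: nat
  have b_sums: "b sums (2 * E)"
    unfolding b_def using sums_mult[OF geometric_sums[of "1/2::real"], of E] by (simp add: mult.commute)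
  have "integrable D (\<lambda>u. exp (\<mu> * \<bar>u\<bar>)) \<and> (\<integral>u. exp (\<mu> * \<bar>u\<bar>) \<partial>D) \<le> suminf b"
  proof (rule integrable_bounded_by_series[where h = "\<lambda>r u. \<mu> ^ r / fact r * \<bar>u\<bar> ^ r"])
    show "(\<lambda>r. \<mu> ^ r / fact r * \<bar>x\<bar> ^ r) sums exp (\<mu> * \<bar>x\<bar>)" for x
      using exp_converges[of "\<mu> * \<bar>x\<bar>"] by (simp add: power_mult_distrib divide_inverse mult_ac)
    show "integrable D (\<lambda>u. \<mu> ^ r / fact r * \<bar>u\<bar> ^ r)" for r
      using abs_moment_le[of r] by simp
    show "0 \<le> \<mu> ^ r / fact r * \<bar>x\<bar> ^ r" for r x using assms by simp
    show "(\<integral>u. \<mu> ^ r / fact r * \<bar>u\<bar> ^ r \<partial>D) \<le> b r" for r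
    proof -
      have "(\<integral>u. \<mu> ^ r / fact r * \<bar>u\<bar> ^ r \<partial>D) = \<mu> ^ r / fact r * (\<integral>u. \<bar>u\<bar> ^ r \<partial>D)"
        by simp
      also have "\<dots> \<le> \<mu> ^ r / fact r * (\<alpha> * sqrt (real r)) ^ r"
        using abs_moment_le[of r] assms by (intro mult_left_mono) auto
      also have "\<dots> = (\<alpha> * \<mu>) ^ r * sqrt (real r) ^ r / fact r"
        by (simp add: power_mult_distrib)
      also have "\<dots> \<le> b r"
        unfolding b_def E_def using \<alpha>_pos assms by (intro power_sqrt_div_fact_le) simp
      finally show ?thesis .
    qed
    show "summable b" using b_sums by (simp add: sums_iff)
    show "(\<lambda>u. exp (\<mu> * \<bar>u\<bar>)) \<in> borel_measurable D" by (intro borel_measurable_D) measurable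
  qed
  then show ?thesis using b_sums by (simp add: sums_iff E_def mult_ac)
qed

abbreviation "K\<^sub>1 \<equiv> mgf_const \<alpha>"

lemma integrable_exp_mult: "integrable D (\<lambda>u. exp (l * u))"
  by (rule Bochner_Integration.integrable_bound[OF conjunct1[OF mgf_abs_le[of "\<bar>l\<bar>"]]])
     (auto intro!: borel_measurable_D AE_I2 simp: abs_mult[symmetric] intro: abs_ge_self)

lemma mgf_le_small:
  assumes small: "\<bar>l\<bar> \<le> 1 / \<alpha>"
  shows "(\<integral>u. exp (l * u) \<partial>D) \<le> exp (K\<^sub>1 * l\<^sup>2)"
proof -
  define g where "g u = 2 * \<alpha>\<^sup>2 * exp (2 / \<alpha> * \<bar>u\<bar>)" for u
  have int_g: "integrable D g" unfolding g_def using mgf_abs_le[of "2/\<alpha>"] \<alpha>_pos by simp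
  have "(\<integral>u. g u \<partial>D) \<le> 2 * \<alpha>\<^sup>2 * (2 * exp ((exp 1 * \<alpha> * (2/\<alpha>))\<^sup>2))"
    unfolding g_def using mgf_abs_le[of "2/\<alpha>"] \<alpha>_pos by (simp add: mult_left_mono)
  also have "\<dots> = 2 * K\<^sub>1"
    using \<alpha>_pos by (simp add: mgf_const_def power2_eq_square field_simps)
  finally have int_g_le: "(\<integral>u. g u \<partial>D) \<le> 2 * K\<^sub>1" .
  have pointwise: "u\<^sup>2 * exp (\<bar>l\<bar> * \<bar>u\<bar>) \<le> g u" for u
    unfolding g_def by (rule square_mul_exp_le[OF \<alpha>_pos small])
  have int_sq: "integrable D (\<lambda>u. u\<^sup>2 * exp (\<bar>l\<bar> * \<bar>u\<bar>))"
    by (rule Bochner_Integration.integrable_bound[OF int_g])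
       (use pointwise in \<open>auto intro!: borel_measurable_D AE_I2 simp: g_def\<close>)
  have "(\<integral>u. exp (l * u) \<partial>D) \<le> 1 + l\<^sup>2 / 2 * (2 * K\<^sub>1)"
    using integral_mono[OF int_sq int_g pointwise] int_g_le
    by (intro centred_mgf_le[where W = "\<lambda>u. u"] integrable_id mean_zero integrable_exp_mult int_sq) auto
  also have "\<dots> \<le> exp (K\<^sub>1 * l\<^sup>2)"
    using exp_ge_add_one_self[of "K\<^sub>1 * l\<^sup>2"] by (simp add: mult_ac)
  finally show ?thesis .
qed

lemma mgf_le_large:
  assumes large: "1 / \<alpha> < \<bar>l\<bar>"
  shows "(\<integral>u. exp (l * u) \<partial>D) \<le> exp (K\<^sub>1 * l\<^sup>2)"
proof -
  have "1 < \<alpha> * \<bar>l\<bar>" using large \<alpha>_pos by (simp add: field_simps)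
  then have large_sq: "1 \<le> \<alpha>\<^sup>2 * l\<^sup>2"
    using one_le_power[of "\<alpha> * \<bar>l\<bar>" 2] by (simp add: power_mult_distrib)
  have "(\<integral>u. exp (l * u) \<partial>D) \<le> (\<integral>u. exp (\<bar>l\<bar> * \<bar>u\<bar>) \<partial>D)"
    using integrable_exp_mult mgf_abs_le[of "\<bar>l\<bar>"] by (intro integral_mono) (auto simp: abs_mult[symmetric])
  also have "\<dots> \<le> 2 * exp ((exp 1)\<^sup>2 * (\<alpha>\<^sup>2 * l\<^sup>2))"
    using mgf_abs_le[of "\<bar>l\<bar>"] by (simp add: power_mult_distrib mult_ac)
  also have "\<dots> \<le> exp (\<alpha>\<^sup>2 * l\<^sup>2) * exp ((exp 1)\<^sup>2 * (\<alpha>\<^sup>2 * l\<^sup>2))"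
  proof (rule mult_right_mono)
    have "2 \<le> exp (1::real)" using exp_ge_add_one_self[of 1] by simp
    also have "\<dots> \<le> exp (\<alpha>\<^sup>2 * l\<^sup>2)" using large_sq by simp
    finally show "2 \<le> exp (\<alpha>\<^sup>2 * l\<^sup>2)" .
  qed simp
  also have "\<dots> = exp ((1 + (exp 1)\<^sup>2) * (\<alpha>\<^sup>2 * l\<^sup>2))"
    by (simp add: algebra_simps flip: exp_add)
  also have "\<dots> \<le> exp (K\<^sub>1 * l\<^sup>2)"
  proof -
    have "(exp (1::real))\<^sup>2 \<le> 1 + 4 * (exp 1)\<^sup>2" by simp
    also have "\<dots> \<le> exp (4 * (exp 1)\<^sup>2)" by (rule exp_ge_add_one_self)
    finally have "(exp 1)\<^sup>2 \<le> exp (4 * (exp (1::real))\<^sup>2)" .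
    moreover have "1 \<le> exp (4 * (exp (1::real))\<^sup>2)" by simp
    ultimately have "1 + (exp 1)\<^sup>2 \<le> 2 * exp (4 * (exp (1::real))\<^sup>2)" by linarith
    then have "(1 + (exp 1)\<^sup>2) * (\<alpha>\<^sup>2 * l\<^sup>2) \<le> (2 * exp (4 * (exp 1)\<^sup>2)) * (\<alpha>\<^sup>2 * l\<^sup>2)"
      by (intro mult_right_mono) auto
    then show ?thesis by (simp add: mgf_const_def mult_ac)
  qed
  finally show ?thesis .
qed

lemma mgf_le:
  "integrable D (\<lambda>u. exp (l * u)) \<and> (\<integral>u. exp (l * u) \<partial>D) \<le> exp (K\<^sub>1 * l\<^sup>2)"
  using integrable_exp_mult mgf_le_small mgf_le_large by (meson not_le)

end

lemma exp_abs_centred_product_le: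
  fixes s \<gamma> a b c :: real
  assumes "0 \<le> s" and "\<bar>\<gamma>\<bar> \<le> 2" and "\<bar>c\<bar> \<le> 1"
  shows "exp (s / 2 * \<bar>\<gamma> * (a * b - c)\<bar>) \<le> exp s / 2 * (exp (s * a\<^sup>2) + exp (s * b\<^sup>2))"
proof -
  have "\<bar>\<gamma> * (a * b - c)\<bar> \<le> 2 * (\<bar>a\<bar> * \<bar>b\<bar> + 1)"
    unfolding abs_mult using assms(2,3) abs_triangle_ineq4[of "a * b" c]
    by (intro mult_mono) (auto simp: abs_mult)
  also have "\<dots> \<le> a\<^sup>2 + b\<^sup>2 + 2"
    using zero_le_power2[of "\<bar>a\<bar> - \<bar>b\<bar>"] by (simp add: power2_eq_square algebra_simps)
  finally have "exp (s / 2 * \<bar>\<gamma> * (a * b - c)\<bar>) \<le> exp (s / 2 * (a\<^sup>2 + b\<^sup>2 + 2))"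
    using assms(1) by (simp add: mult_left_mono)
  also have "\<dots> = exp s * (exp (s / 2 * a\<^sup>2) * exp (s / 2 * b\<^sup>2))"
    by (simp add: algebra_simps flip: exp_add)
  also have "exp (s / 2 * a\<^sup>2) * exp (s / 2 * b\<^sup>2) \<le> (exp (s * a\<^sup>2) + exp (s * b\<^sup>2)) / 2"
    using zero_le_power2[of "exp (s / 2 * a\<^sup>2) - exp (s / 2 * b\<^sup>2)"]
    by (simp add: power2_eq_square algebra_simps flip: exp_add)
  finally show ?thesis by (simp add: mult_left_mono)
qed

lemma abs_sum_mult_le_one:
  fixes v w :: "'a \<Rightarrow> real"
  assumes "(\<Sum>j\<in>J. (v j)\<^sup>2) \<le> 1" and "(\<Sum>j\<in>J. (w j)\<^sup>2) \<le> 1"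
  shows "\<bar>\<Sum>j\<in>J. v j * w j\<bar> \<le> 1"
proof -
  have "\<bar>\<Sum>j\<in>J. v j * w j\<bar> \<le> (\<Sum>j\<in>J. ((v j)\<^sup>2 + (w j)\<^sup>2) / 2)"
  proof (rule order_trans[OF sum_abs sum_mono])
    show "\<bar>v j * w j\<bar> \<le> ((v j)\<^sup>2 + (w j)\<^sup>2) / 2" for j
      using zero_le_power2[of "\<bar>v j\<bar> - \<bar>w j\<bar>"] by (simp add: power2_eq_square abs_mult algebra_simps)
  qed
  also have "\<dots> = ((\<Sum>j\<in>J. (v j)\<^sup>2) + (\<Sum>j\<in>J. (w j)\<^sup>2)) / 2"
    by (simp only: sum_divide_distrib[symmetric] sum.distrib)
  also have "\<dots> \<le> 1" using assms by simp
  finally show ?thesis .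
qed

locale subgaussian_product = subgaussian_law +
  fixes I :: "'i set"
  assumes finite_I: "finite I"
begin

abbreviation "M \<equiv> PiM I (\<lambda>_. D)"
abbreviation "s\<^sub>0 \<equiv> sq_mgf_radius \<alpha>"
abbreviation "\<epsilon> \<equiv> bilin_mgf_radius \<alpha>"
abbreviation "K\<^sub>2 \<equiv> bilin_mgf_const \<alpha>"

lemma K\<^sub>1_pos: "K\<^sub>1 > 0"
  by (rule mgf_const_pos[OF \<alpha>_pos])

lemma product_prob_space_D: "product_prob_space (\<lambda>_. D)"
  by (simp add: prob_space_D product_prob_space_def product_prob_space_axioms_def product_sigma_finite_def prob_space_imp_sigma_finite)

lemma prob_space_PiM_D: "prob_space M" by (rule prob_space_PiM) (simp add: prob_space_D)

lemma integral_prod_components: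
  fixes f :: "'i \<Rightarrow> real \<Rightarrow> real"
  assumes J: "J \<subseteq> I" and f: "\<And>j. j \<in> J \<Longrightarrow> integrable D (f j)"
  shows "integrable M (\<lambda>\<omega>. \<Prod>j\<in>J. f j (\<omega> j)) \<and> (\<integral>\<omega>. (\<Prod>j\<in>J. f j (\<omega> j)) \<partial>M) = (\<Prod>j\<in>J. \<integral>u. f j u \<partial>D)"
proof -
  interpret P: product_prob_space "\<lambda>_. D" I by (rule product_prob_space_D)
  have integral_one: "(\<integral>u. 1 \<partial>D) = (1::real)" using prob_space.prob_space[OF prob_space_D] by simp
  define g where "g j = (if j \<in> J then f j else (\<lambda>_. 1))" for j
  have int_g: "integrable D (g j)" if "j \<in> I" for j using f by (simp add: g_def)
  have eq: "(\<lambda>\<omega>. \<Prod>j\<in>J. f j (\<omega> j)) = (\<lambda>\<omega>. \<Prod>j\<in>I. g j (\<omega> j))"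
    using J finite_I by (intro ext prod.mono_neutral_cong_left) (auto simp: g_def)
  have integral_eq: "(\<Prod>j\<in>I. \<integral>u. g j u \<partial>D) = (\<Prod>j\<in>J. \<integral>u. f j u \<partial>D)"
    using J finite_I by (intro prod.mono_neutral_cong_right) (auto simp: g_def integral_one prob_space.prob_space[OF prob_space_D])
  show ?thesis unfolding eq
    using P.product_integrable_prod[OF finite_I int_g] P.product_integral_prod[OF finite_I int_g] integral_eq by simp
qed

lemma linear_form_mgf_le:
  assumes J: "J \<subseteq> I"
  shows "integrable M (\<lambda>\<omega>. exp (l * (\<Sum>j\<in>J. v j * \<omega> j))) \<and>
         (\<integral>\<omega>. exp (l * (\<Sum>j\<in>J. v j * \<omega> j)) \<partial>M) \<le> exp (K\<^sub>1 * l\<^sup>2 * (\<Sum>j\<in>J. (v j)\<^sup>2))"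
proof -
  have finJ: "finite J" using J finite_I finite_subset by blast
  have eq: "(\<lambda>\<omega>. exp (l * (\<Sum>j\<in>J. v j * \<omega> j))) = (\<lambda>\<omega>. \<Prod>j\<in>J. (\<lambda>u. exp ((l * v j) * u)) (\<omega> j))"
    using finJ by (simp add: sum_distrib_left exp_sum mult_ac)
  have P: "integrable M (\<lambda>\<omega>. \<Prod>j\<in>J. (\<lambda>u. exp ((l * v j) * u)) (\<omega> j)) \<and> (\<integral>\<omega>. (\<Prod>j\<in>J. (\<lambda>u. exp ((l * v j) * u)) (\<omega> j)) \<partial>M) = (\<Prod>j\<in>J. \<integral>u. exp ((l * v j) * u) \<partial>D)"
    by (rule integral_prod_components[OF J]) (use mgf_le in blast)
  have "(\<Prod>j\<in>J. \<integral>u. exp ((l * v j) * u) \<partial>D) \<le> (\<Prod>j\<in>J. exp (K\<^sub>1 * (l * v j)\<^sup>2))"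
    by (intro prod_mono) (use mgf_le in \<open>auto intro: integral_nonneg_AE\<close>)
  also have "\<dots> = exp (K\<^sub>1 * l\<^sup>2 * (\<Sum>j\<in>J. (v j)\<^sup>2))"
    using finJ by (simp add: exp_sum[symmetric] sum_distrib_left power_mult_distrib mult_ac)
  finally show ?thesis using P unfolding eq by simp
qed

lemma linear_form_measurable: "(\<lambda>\<omega>. \<Sum>j\<in>J. v j * \<omega> j) \<in> borel_measurable M" if "J \<subseteq> I" for J v
proof -
  have "(\<lambda>\<omega>. \<omega> j) \<in> borel_measurable M" if "j \<in> J" for j
    using \<open>J \<subseteq> I\<close> that measurable_component_singleton[of j I "\<lambda>_. D"] measurable_cong_sets[OF refl sets_D] by blast
  then show ?thesis by (intro borel_measurable_sum borel_measurable_times) auto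
qed

lemma linear_form_even_moment_le:
  assumes J: "J \<subseteq> I" and v: "(\<Sum>j\<in>J. (v j)\<^sup>2) \<le> 1" and q: "1 \<le> q"
  shows "integrable M (\<lambda>\<omega>. (\<Sum>j\<in>J. v j * \<omega> j) ^ (2*q)) \<and>
         (\<integral>\<omega>. (\<Sum>j\<in>J. v j * \<omega> j) ^ (2*q) \<partial>M) \<le> 2 * fact (2*q) * (K\<^sub>1 * exp 1 / q) ^ q"
proof -
  define Z where "Z \<omega> = (\<Sum>j\<in>J. v j * \<omega> j)" for \<omega> :: "'i \<Rightarrow> real"
  define \<mu> where "\<mu> = sqrt (q / K\<^sub>1)"
  have \<mu>_pos: "\<mu> > 0" using q K\<^sub>1_pos by (simp add: \<mu>_def)
  have \<mu>_sq: "\<mu>\<^sup>2 = q / K\<^sub>1" using q K\<^sub>1_pos by (simp add: \<mu>_def)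
  define c where "c = fact (2*q) / \<mu> ^ (2*q)"
  have c_nonneg: "c \<ge> 0" using \<mu>_pos by (simp add: c_def)
  have pointwise: "Z \<omega> ^ (2*q) \<le> c * (exp (\<mu> * Z \<omega>) + exp ((-\<mu>) * Z \<omega>))" for \<omega>
  proof -
    have "(\<mu> * \<bar>Z \<omega>\<bar>) ^ (2*q) / fact (2*q) \<le> exp (\<mu> * \<bar>Z \<omega>\<bar>)"
      using \<mu>_pos by (intro power_div_fact_le_exp) simp
    also have "\<dots> \<le> exp (\<mu> * Z \<omega>) + exp ((-\<mu>) * Z \<omega>)"
      by (cases "Z \<omega> \<ge> 0") (auto simp: abs_if add_increasing add_increasing2)
    finally have a: "(\<mu> * \<bar>Z \<omega>\<bar>) ^ (2*q) \<le> fact (2*q) * (exp (\<mu> * Z \<omega>) + exp ((-\<mu>) * Z \<omega>))"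
      by (simp add: divide_le_eq mult.commute)
    have "Z \<omega> ^ (2*q) = (\<mu> * \<bar>Z \<omega>\<bar>) ^ (2*q) / \<mu> ^ (2*q)"
      using \<mu>_pos by (simp add: power_mult_distrib power_even_abs)
    also have "\<dots> \<le> fact (2*q) * (exp (\<mu> * Z \<omega>) + exp ((-\<mu>) * Z \<omega>)) / \<mu> ^ (2*q)"
      using a \<mu>_pos by (intro divide_right_mono) auto
    finally show ?thesis by (simp add: c_def)
  qed
  have int_pos: "integrable M (\<lambda>\<omega>. exp (\<mu> * Z \<omega>))" and int_neg: "integrable M (\<lambda>\<omega>. exp ((-\<mu>) * Z \<omega>))"
    using linear_form_mgf_le[OF J, of \<mu> v] linear_form_mgf_le[OF J, of "-\<mu>" v] by (simp_all add: Z_def)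
  have int_bound: "integrable M (\<lambda>\<omega>. c * (exp (\<mu> * Z \<omega>) + exp ((-\<mu>) * Z \<omega>)))"
    using int_pos int_neg by simp
  have int_power: "integrable M (\<lambda>\<omega>. Z \<omega> ^ (2*q))"
  proof (rule Bochner_Integration.integrable_bound[OF int_bound])
    show "(\<lambda>\<omega>. Z \<omega> ^ (2*q)) \<in> borel_measurable M" unfolding Z_def using linear_form_measurable[OF J] by measurable
    show "AE \<omega> in M. norm (Z \<omega> ^ (2*q)) \<le> norm (c * (exp (\<mu> * Z \<omega>) + exp ((-\<mu>) * Z \<omega>)))"
      using pointwise c_nonneg by (intro AE_I2) (simp add: power_mult zero_le_power2 abs_mult)
  qed
  have mgf_at: "(\<integral>\<omega>. exp (l * Z \<omega>) \<partial>M) \<le> exp (K\<^sub>1 * \<mu>\<^sup>2)" if "l\<^sup>2 = \<mu>\<^sup>2" for l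
  proof -
    have "(\<integral>\<omega>. exp (l * Z \<omega>) \<partial>M) \<le> exp (K\<^sub>1 * l\<^sup>2 * (\<Sum>j\<in>J. (v j)\<^sup>2))"
      using linear_form_mgf_le[OF J, of l v] by (simp add: Z_def)
    also have "\<dots> \<le> exp (K\<^sub>1 * \<mu>\<^sup>2)"
      using v K\<^sub>1_pos that by (simp add: mult_left_le)
    finally show ?thesis .
  qed
  have "(\<integral>\<omega>. Z \<omega> ^ (2*q) \<partial>M) \<le> (\<integral>\<omega>. c * (exp (\<mu> * Z \<omega>) + exp ((-\<mu>) * Z \<omega>)) \<partial>M)"
    by (rule integral_mono[OF int_power int_bound pointwise])
  also have "\<dots> = c * ((\<integral>\<omega>. exp (\<mu> * Z \<omega>) \<partial>M) + (\<integral>\<omega>. exp ((-\<mu>) * Z \<omega>) \<partial>M))"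
    using int_pos int_neg by simp
  also have "\<dots> \<le> c * (exp (K\<^sub>1 * \<mu>\<^sup>2) + exp (K\<^sub>1 * \<mu>\<^sup>2))"
    using mgf_at[of \<mu>] mgf_at[of "-\<mu>"] c_nonneg by (intro mult_left_mono add_mono) auto
  also have "\<dots> = 2 * fact (2*q) * (K\<^sub>1 * exp 1 / q) ^ q"
  proof -
    have \<mu>_power: "\<mu> ^ (2*q) = (q / K\<^sub>1) ^ q" by (simp add: power_mult \<mu>_sq)
    have c_eq: "c = fact (2*q) * (K\<^sub>1 / q) ^ q" using q K\<^sub>1_pos by (simp add: c_def \<mu>_power power_divide)
    have exp_eq: "exp (K\<^sub>1 * \<mu>\<^sup>2) = exp 1 ^ q" using K\<^sub>1_pos by (simp add: \<mu>_sq exp_of_nat_mult[symmetric])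
    have "c * (exp (K\<^sub>1 * \<mu>\<^sup>2) + exp (K\<^sub>1 * \<mu>\<^sup>2)) = 2 * fact (2*q) * ((K\<^sub>1 / q) ^ q * exp 1 ^ q)"
      by (simp add: c_eq exp_eq)
    also have "(K\<^sub>1 / q) ^ q * exp 1 ^ q = (K\<^sub>1 * exp 1 / q) ^ q" by (simp add: power_mult_distrib[symmetric])
    finally show ?thesis .
  qed
  finally show ?thesis using int_power by (simp add: Z_def)
qed

lemma linear_form_square_mgf_le:
  assumes J: "J \<subseteq> I" and v: "(\<Sum>j\<in>J. (v j)\<^sup>2) \<le> 1" and s: "0 \<le> s" "s \<le> s\<^sub>0"
  shows "integrable M (\<lambda>\<omega>. exp (s * (\<Sum>j\<in>J. v j * \<omega> j)\<^sup>2)) \<and>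
         (\<integral>\<omega>. exp (s * (\<Sum>j\<in>J. v j * \<omega> j)\<^sup>2) \<partial>M) \<le> 3"
proof -
  interpret PM: prob_space M by (rule prob_space_PiM_D)
  define Z where "Z \<omega> = (\<Sum>j\<in>J. v j * \<omega> j)" for \<omega> :: "'i \<Rightarrow> real"
  define b where "b q = 2 * (1/4::real) ^ q" for q :: nat
  have b_sums: "b sums (8/3)" unfolding b_def using sums_mult[OF geometric_sums[of "1/4::real"], of 2] by simp
  have "integrable M (\<lambda>\<omega>. exp (s * (Z \<omega>)\<^sup>2)) \<and> (\<integral>\<omega>. exp (s * (Z \<omega>)\<^sup>2) \<partial>M) \<le> suminf b"
  proof (rule integrable_bounded_by_series[where h = "\<lambda>q \<omega>. s ^ q / fact q * Z \<omega> ^ (2*q)"])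
    show "(\<lambda>q. s ^ q / fact q * Z \<omega> ^ (2*q)) sums exp (s * (Z \<omega>)\<^sup>2)" for \<omega>
    proof -
      have "(\<lambda>q. s ^ q / fact q * Z \<omega> ^ (2*q)) = (\<lambda>q. (s * (Z \<omega>)\<^sup>2) ^ q /\<^sub>R fact q)"
        by (intro ext) (simp only: power_mult power_mult_distrib, simp add: divide_inverse mult_ac)
      then show ?thesis using exp_converges[of "s * (Z \<omega>)\<^sup>2"] by simp
    qed
    show "integrable M (\<lambda>\<omega>. s ^ q / fact q * Z \<omega> ^ (2*q))" for q
    proof (cases "q = 0")
      case True then show ?thesis by simp
    next
      case False then show ?thesis using linear_form_even_moment_le[OF J v, of q] by (simp add: Z_def)
    qed
    show "0 \<le> s ^ q / fact q * Z \<omega> ^ (2*q)" for q \<omega> using s by (simp add: power_mult)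
    show "(\<integral>\<omega>. s ^ q / fact q * Z \<omega> ^ (2*q) \<partial>M) \<le> b q" for q
    proof (cases "q = 0")
      case True then show ?thesis by (simp add: b_def PM.prob_space)
    next
      case False
      have "(\<integral>\<omega>. s ^ q / fact q * Z \<omega> ^ (2*q) \<partial>M) = s ^ q / fact q * (\<integral>\<omega>. Z \<omega> ^ (2*q) \<partial>M)" by simp
      also have "\<dots> \<le> s ^ q / fact q * (2 * fact (2*q) * (K\<^sub>1 * exp 1 / q) ^ q)"
        using linear_form_even_moment_le[OF J v, of q] False s by (intro mult_left_mono) (auto simp: Z_def)
      also have "\<dots> \<le> s ^ q / fact q * (2 * (4 ^ q * (fact q)\<^sup>2) * (K\<^sub>1 * exp 1 / q) ^ q)"
        using fact_double_le[of q] s K\<^sub>1_pos by (intro mult_left_mono mult_right_mono) auto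
      also have "\<dots> = 2 * (4 * s * K\<^sub>1 * exp 1) ^ q * (fact q / real q ^ q)"
        using False by (simp add: power2_eq_square power_mult_distrib power_divide field_simps)
      also have "\<dots> \<le> 2 * (1/4) ^ q * 1"
      proof (intro mult_mono mult_left_mono power_mono)
        show "4 * s * K\<^sub>1 * exp 1 \<le> 1/4" using s K\<^sub>1_pos by (simp add: sq_mgf_radius_def mgf_const_def field_simps)
        show "fact q / real q ^ q \<le> 1" using False fact_le_power[of q, where 'a=real] by simp
      qed (use s K\<^sub>1_pos in auto)
      finally show ?thesis by (simp add: b_def)
    qed
    show "summable b" using b_sums by (simp add: sums_iff)
    show "(\<lambda>\<omega>. exp (s * (Z \<omega>)\<^sup>2)) \<in> borel_measurable M" unfolding Z_def using linear_form_measurable[OF J] by measurable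
  qed
  moreover have "suminf b \<le> 3" using b_sums by (simp add: sums_iff)
  ultimately show ?thesis by (simp add: Z_def)
qed

lemma integral_component_mult:
  assumes j: "j \<in> I" and k: "k \<in> I"
  shows "integrable M (\<lambda>\<omega>. \<omega> j * \<omega> k) \<and> (\<integral>\<omega>. \<omega> j * \<omega> k \<partial>M) = (if j = k then 1 else 0)"
proof (cases "j = k")
  case True
  have "integrable M (\<lambda>\<omega>. \<Prod>i\<in>{j}. (\<lambda>u. u\<^sup>2) (\<omega> i)) \<and> (\<integral>\<omega>. (\<Prod>i\<in>{j}. (\<lambda>u. u\<^sup>2) (\<omega> i)) \<partial>M) = (\<Prod>i\<in>{j}. \<integral>u. (\<lambda>u. u\<^sup>2) u \<partial>D)"
    by (rule integral_prod_components) (use j integrable_square in auto)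
  then show ?thesis using True second_moment by (simp add: power2_eq_square)
next
  case False
  have "integrable M (\<lambda>\<omega>. \<Prod>i\<in>{j,k}. (\<lambda>u. u) (\<omega> i)) \<and> (\<integral>\<omega>. (\<Prod>i\<in>{j,k}. (\<lambda>u. u) (\<omega> i)) \<partial>M) = (\<Prod>i\<in>{j,k}. \<integral>u. (\<lambda>u. u) u \<partial>D)"
    by (rule integral_prod_components) (use j k integrable_id in auto)
  then show ?thesis using False mean_zero by simp
qed

lemma integral_linear_forms_mult:
  assumes J: "J \<subseteq> I"
  shows "integrable M (\<lambda>\<omega>. (\<Sum>j\<in>J. v j * \<omega> j) * (\<Sum>j\<in>J. w j * \<omega> j)) \<and>
    (\<integral>\<omega>. (\<Sum>j\<in>J. v j * \<omega> j) * (\<Sum>j\<in>J. w j * \<omega> j) \<partial>M) = (\<Sum>j\<in>J. v j * w j)"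
proof -
  have finite_J: "finite J" using J finite_I finite_subset by blast
  have eq: "(\<lambda>\<omega>. (\<Sum>j\<in>J. v j * \<omega> j) * (\<Sum>j\<in>J. w j * \<omega> j)) = (\<lambda>\<omega>. \<Sum>j\<in>J. \<Sum>k\<in>J. (v j * w k) * (\<omega> j * \<omega> k))"
    by (intro ext) (simp add: sum_product mult_ac)
  have int_term: "integrable M (\<lambda>\<omega>. (v j * w k) * (\<omega> j * \<omega> k))" if "j \<in> J" "k \<in> J" for j k
    using integral_component_mult[of j k] that J by auto
  have "integrable M (\<lambda>\<omega>. \<Sum>j\<in>J. \<Sum>k\<in>J. (v j * w k) * (\<omega> j * \<omega> k))"
    using int_term by (intro Bochner_Integration.integrable_sum) auto
  moreover have "(\<integral>\<omega>. (\<Sum>j\<in>J. \<Sum>k\<in>J. (v j * w k) * (\<omega> j * \<omega> k)) \<partial>M) = (\<Sum>j\<in>J. \<Sum>k\<in>J. (v j * w k) * (if j = k then 1 else 0))"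
  proof -
    have "(\<integral>\<omega>. (\<Sum>j\<in>J. \<Sum>k\<in>J. (v j * w k) * (\<omega> j * \<omega> k)) \<partial>M) = (\<Sum>j\<in>J. \<integral>\<omega>. (\<Sum>k\<in>J. (v j * w k) * (\<omega> j * \<omega> k)) \<partial>M)"
      using int_term by (intro Bochner_Integration.integral_sum Bochner_Integration.integrable_sum) auto
    also have "\<dots> = (\<Sum>j\<in>J. \<Sum>k\<in>J. \<integral>\<omega>. (v j * w k) * (\<omega> j * \<omega> k) \<partial>M)"
      using int_term by (intro sum.cong refl Bochner_Integration.integral_sum) auto
    also have "\<dots> = (\<Sum>j\<in>J. \<Sum>k\<in>J. (v j * w k) * (if j = k then 1 else 0))"
    proof (intro sum.cong refl)
      fix j k assume "j \<in> J" "k \<in> J"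
      then have "(\<integral>\<omega>. \<omega> j * \<omega> k \<partial>M) = (if j = k then 1 else 0)" using integral_component_mult J by blast
      then show "(\<integral>\<omega>. (v j * w k) * (\<omega> j * \<omega> k) \<partial>M) = (v j * w k) * (if j = k then 1 else 0)"
        by simp
    qed
    finally show ?thesis .
  qed
  moreover have "(\<Sum>j\<in>J. \<Sum>k\<in>J. (v j * w k) * (if j = k then 1 else 0)) = (\<Sum>j\<in>J. v j * w j)"
    using finite_J by (simp add: if_distrib cong: if_cong)
  ultimately show ?thesis unfolding eq by simp
qed

lemma bilinear_form_mgf_le:
  assumes J: "J \<subseteq> I" and v: "(\<Sum>j\<in>J. (v j)\<^sup>2) \<le> 1" and w: "(\<Sum>j\<in>J. (w j)\<^sup>2) \<le> 1"
    and \<gamma>: "\<bar>\<gamma>\<bar> \<le> 2" and l: "\<bar>l\<bar> \<le> \<epsilon>"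
  shows "integrable M (\<lambda>\<omega>. exp (l * (\<gamma> * ((\<Sum>j\<in>J. v j * \<omega> j) * (\<Sum>j\<in>J. w j * \<omega> j) - (\<Sum>j\<in>J. v j * w j))))) \<and>
    (\<integral>\<omega>. exp (l * (\<gamma> * ((\<Sum>j\<in>J. v j * \<omega> j) * (\<Sum>j\<in>J. w j * \<omega> j) - (\<Sum>j\<in>J. v j * w j)))) \<partial>M)
      \<le> exp (K\<^sub>2 * l\<^sup>2)"
proof -
  interpret PM: prob_space M by (rule prob_space_PiM_D)
  define Zv where "Zv \<omega> = (\<Sum>j\<in>J. v j * \<omega> j)" for \<omega> :: "'i \<Rightarrow> real"
  define Zw where "Zw \<omega> = (\<Sum>j\<in>J. w j * \<omega> j)" for \<omega> :: "'i \<Rightarrow> real"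
  define c where "c = (\<Sum>j\<in>J. v j * w j)"
  define W where "W \<omega> = \<gamma> * (Zv \<omega> * Zw \<omega> - c)" for \<omega>
  define G where "G \<omega> = exp s\<^sub>0 / 2 * (exp (s\<^sub>0 * (Zv \<omega>)\<^sup>2) + exp (s\<^sub>0 * (Zw \<omega>)\<^sup>2))" for \<omega>
  have \<epsilon>_pos: "\<epsilon> > 0" by (rule bilin_mgf_radius_pos[OF \<alpha>_pos])
  have s\<^sub>0_eq: "s\<^sub>0 = 4 * \<epsilon>" by (simp add: bilin_mgf_radius_def)
  have "integrable M (\<lambda>\<omega>. exp (s\<^sub>0 * (Zv \<omega>)\<^sup>2)) \<and> (\<integral>\<omega>. exp (s\<^sub>0 * (Zv \<omega>)\<^sup>2) \<partial>M) \<le> 3"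
       "integrable M (\<lambda>\<omega>. exp (s\<^sub>0 * (Zw \<omega>)\<^sup>2)) \<and> (\<integral>\<omega>. exp (s\<^sub>0 * (Zw \<omega>)\<^sup>2) \<partial>M) \<le> 3"
    unfolding Zv_def Zw_def using \<epsilon>_pos s\<^sub>0_eq
    by (auto intro!: linear_form_square_mgf_le[OF J v] linear_form_square_mgf_le[OF J w])
  then have int_G: "integrable M G" and int_G_le: "(\<integral>\<omega>. G \<omega> \<partial>M) \<le> 3 * exp s\<^sub>0"
    unfolding G_def by (simp_all add: mult_left_mono)
  have "\<bar>c\<bar> \<le> 1" unfolding c_def by (rule abs_sum_mult_le_one[OF v w])
  moreover have "2 * \<epsilon> = s\<^sub>0 / 2" using s\<^sub>0_eq by simp
  ultimately have dominated: "exp (2 * \<epsilon> * \<bar>W \<omega>\<bar>) \<le> G \<omega>" for \<omega>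
    unfolding W_def G_def using \<epsilon>_pos s\<^sub>0_eq \<gamma>
    by (simp only:) (intro exp_abs_centred_product_le, auto)
  have "integrable M (\<lambda>\<omega>. Zv \<omega> * Zw \<omega>) \<and> (\<integral>\<omega>. Zv \<omega> * Zw \<omega> \<partial>M) = c"
    unfolding Zv_def Zw_def c_def by (rule integral_linear_forms_mult[OF J])
  then have int_W: "integrable M W" and mean_W: "(\<integral>\<omega>. W \<omega> \<partial>M) = 0"
    unfolding W_def by (simp_all add: PM.prob_space)
  have "1 + l\<^sup>2 * (3 * exp s\<^sub>0) / \<epsilon>\<^sup>2 = 1 + K\<^sub>2 * l\<^sup>2" by (simp add: bilin_mgf_const_def)
  also have "\<dots> \<le> exp (K\<^sub>2 * l\<^sup>2)" by (rule exp_ge_add_one_self)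
  finally show ?thesis
    using PM.mgf_le_of_exp_abs_dominated[OF int_W mean_W int_G int_G_le dominated \<epsilon>_pos l]
    unfolding W_def Zv_def Zw_def c_def by simp
qed
end

text \<open>A finite \<open>1/2\<close>-norming subset of the unit ball: every unit vector has inner product at least
  \<open>1/2\<close> with one of its points.\<close>

definition half_net :: "nat \<Rightarrow> (nat \<Rightarrow> real) set" where
  "half_net n = {u. (\<forall>j<n. \<exists>k::int. \<bar>k\<bar> \<le> 2 * int n \<and> u j = real_of_int k / (2 * real n)) \<and> (\<forall>j. n \<le> j \<longrightarrow> u j = 0) \<and> (\<Sum>j<n. (u j)\<^sup>2) \<le> 1}"

lemma finite_card_half_net: "finite (half_net n) \<and> card (half_net n) \<le> (4 * n + 1) ^ n"
proof -
  define S where "S = (\<lambda>k::int. real_of_int k / (2 * real n)) ` {-2 * int n..2 * int n}"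
  define E where "E f = (\<lambda>j. if j < n then f j else (0::real))" for f :: "nat \<Rightarrow> real"
  have sub: "half_net n \<subseteq> E ` (PiE {..<n} (\<lambda>_. S))"
  proof
    fix u assume u: "u \<in> half_net n"
    have "u i \<in> S" if "i < n" for i
    proof -
      have "\<exists>k::int. \<bar>k\<bar> \<le> 2 * int n \<and> u i = real_of_int k / (2 * real n)"
        using u that unfolding half_net_def by simp
      then obtain k :: int where "\<bar>k\<bar> \<le> 2 * int n" "u i = real_of_int k / (2 * real n)" by blast
      moreover have "k \<in> {-2 * int n..2 * int n}" using calculation(1) by (simp add: abs_le_iff)
      ultimately show ?thesis unfolding S_def by (intro image_eqI[of _ _ k]) simp_all
    qed
    then have "restrict u {..<n} \<in> PiE {..<n} (\<lambda>_. S)" by (auto simp: PiE_iff)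
    moreover have "u = E (restrict u {..<n})"
      using u unfolding half_net_def E_def by (auto simp: fun_eq_iff not_less)
    ultimately show "u \<in> E ` (PiE {..<n} (\<lambda>_. S))" by blast
  qed
  have fS: "finite S" by (simp add: S_def)
  have cS: "card S \<le> 4 * n + 1"
  proof -
    have "card S \<le> card {-2 * int n..2 * int n}" unfolding S_def by (rule card_image_le) simp
    also have "\<dots> = 4 * n + 1" by simp
    finally show ?thesis .
  qed
  have fP: "finite (PiE {..<n} (\<lambda>_. S))" using fS by (simp add: finite_PiE)
  have "card (half_net n) \<le> card (E ` (PiE {..<n} (\<lambda>_. S)))" using sub fP by (intro card_mono) auto
  also have "\<dots> \<le> card (PiE {..<n} (\<lambda>_. S))" by (rule card_image_le[OF fP])
  also have "\<dots> = card S ^ n" by (simp add: card_PiE)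
  also have "\<dots> \<le> (4 * n + 1) ^ n" by (intro power_mono cS) simp
  finally show ?thesis using sub fP finite_subset by blast
qed

lemma abs_le_one_of_sum_squares:
  fixes w :: "nat \<Rightarrow> real"
  assumes "(\<Sum>j<n. (w j)\<^sup>2) \<le> 1" and "j < n"
  shows "\<bar>w j\<bar> \<le> 1"
proof -
  have "(w j)\<^sup>2 \<le> (\<Sum>j<n. (w j)\<^sup>2)" by (rule member_le_sum) (use assms(2) in auto)
  then have "\<bar>w j\<bar>\<^sup>2 \<le> 1\<^sup>2" using assms(1) by simp
  then show ?thesis by (rule power2_le_imp_le) simp
qed

definition net_round :: "nat \<Rightarrow> (nat \<Rightarrow> real) \<Rightarrow> nat \<Rightarrow> real" where
  "net_round n w j =
     (if j < n then sgn (w j) * real_of_int \<lfloor>\<bar>w j\<bar> * (2 * real n)\<rfloor> / (2 * real n) else 0)"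

lemma net_round_mem_half_net:
  assumes n: "1 \<le> n" and w: "(\<Sum>j<n. (w j)\<^sup>2) \<le> 1"
  shows "net_round n w \<in> half_net n"
  unfolding half_net_def
proof (intro CollectI conjI allI impI)
  define a where "a j = \<lfloor>\<bar>w j\<bar> * (2 * real n)\<rfloor>" for j
  have np: "(0::real) < 2 * real n" using n by simp
  have a_le: "real_of_int (a j) \<le> \<bar>w j\<bar> * (2 * real n)" for j unfolding a_def by (rule of_int_floor_le)
  have a_nonneg: "0 \<le> a j" for j by (simp add: a_def)
  fix j assume j: "j < n"
  show "\<exists>k::int. \<bar>k\<bar> \<le> 2 * int n \<and> net_round n w j = real_of_int k / (2 * real n)"
  proof (rule exI[of _ "if w j < 0 then - a j else a j"], intro conjI)
    have "\<bar>w j\<bar> * (2 * real n) \<le> 1 * (2 * real n)"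
      using abs_le_one_of_sum_squares[OF w j] np by (intro mult_right_mono) auto
    then have "a j \<le> 2 * int n" using a_le[of j] by linarith
    then show "\<bar>if w j < 0 then - a j else a j\<bar> \<le> 2 * int n" using a_nonneg[of j] by auto
    show "net_round n w j = real_of_int (if w j < 0 then - a j else a j) / (2 * real n)"
      using j by (auto simp: net_round_def sgn_if a_def)
  qed
next
  fix j assume "n \<le> j" then show "net_round n w j = 0" by (simp add: net_round_def)
next
  have "\<bar>net_round n w j\<bar> \<le> \<bar>w j\<bar>" for j
    using of_int_floor_le[of "\<bar>w j\<bar> * (2 * real n)"] n
    by (auto simp: net_round_def abs_mult sgn_if divide_le_eq)
  then have "(\<Sum>j<n. (net_round n w j)\<^sup>2) \<le> (\<Sum>j<n. (w j)\<^sup>2)"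
    by (intro sum_mono) (metis abs_ge_zero power2_abs power_mono)
  then show "(\<Sum>j<n. (net_round n w j)\<^sup>2) \<le> 1" using w by simp
qed

lemma net_round_inner_ge:
  assumes n: "1 \<le> n" and w: "(\<Sum>j<n. (w j)\<^sup>2) = 1"
  shows "1/2 \<le> (\<Sum>j<n. net_round n w j * w j)"
proof -
  have np: "(0::real) < 2 * real n" using n by simp
  have "\<bar>w j\<bar>\<^sup>2 - \<bar>w j\<bar> / (2 * real n) \<le> net_round n w j * w j" if "j < n" for j
  proof -
    define a where "a = real_of_int \<lfloor>\<bar>w j\<bar> * (2 * real n)\<rfloor>"
    have "\<bar>w j\<bar>\<^sup>2 - \<bar>w j\<bar> / (2 * real n) = (\<bar>w j\<bar> * (2 * real n) - 1) * \<bar>w j\<bar> / (2 * real n)"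
      using np by (simp add: field_simps power2_eq_square)
    also have "\<dots> \<le> a * \<bar>w j\<bar> / (2 * real n)"
      using np unfolding a_def by (intro divide_right_mono mult_right_mono) linarith+
    also have "\<dots> = net_round n w j * w j"
      using that by (cases "w j > 0"; cases "w j < 0") (auto simp: net_round_def sgn_if a_def)
    finally show ?thesis .
  qed
  then have "(\<Sum>j<n. (w j)\<^sup>2 - \<bar>w j\<bar> / (2 * real n)) \<le> (\<Sum>j<n. net_round n w j * w j)"
    by (intro sum_mono) (metis lessThan_iff power2_abs)
  moreover have "(\<Sum>j<n. \<bar>w j\<bar>) \<le> (\<Sum>j<n. 1)"
    using abs_le_one_of_sum_squares[where w = w and n = n] w by (intro sum_mono) auto
  then have "(\<Sum>j<n. \<bar>w j\<bar>) / (2 * real n) \<le> 1/2" using np by (simp add: divide_le_eq)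
  ultimately show ?thesis using w by (simp add: sum_subtractf flip: sum_divide_distrib)
qed

lemma half_net_norming:
  assumes "1 \<le> n" and "(\<Sum>j<n. (w j)\<^sup>2) = 1"
  shows "\<exists>u\<in>half_net n. 1/2 \<le> (\<Sum>j<n. u j * w j)"
  using net_round_mem_half_net[of n w] net_round_inner_ge[of n w] assms by auto

lemma card_half_net_le_exp:
  assumes "2 \<le> n"
  shows "real (card (half_net n)) \<le> exp (4 * real n * ln (real n))"
proof -
  have "real (card (half_net n)) \<le> real ((4 * n + 1) ^ n)"
    using finite_card_half_net by (simp only: of_nat_le_iff)
  also have "\<dots> = exp (real n * ln (real (4 * n + 1)))"
    by (subst exp_of_nat_mult) (simp del: of_nat_Suc of_nat_add)
  also have "\<dots> \<le> exp (4 * real n * ln (real n))"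
  proof -
    have "2 * 2 * 2 * n \<le> n * n * n * n"
      using assms by (intro mult_mono) auto
    then have "4 * n + 1 \<le> n ^ 4"
      using assms unfolding power4_eq_xxxx by linarith
    then have "ln (real (4 * n + 1)) \<le> ln (real (n ^ 4))" using assms
      by (subst ln_le_cancel_iff) (auto simp del: of_nat_Suc of_nat_add)
    also have "\<dots> = 4 * ln (real n)" using assms by (simp add: ln_realpow)
    finally show ?thesis by (simp add: mult_left_mono mult_ac)
  qed
  finally show ?thesis .
qed

lemma norm_le_of_half_net:
  assumes "1 \<le> n" and small: "\<And>u. u \<in> half_net n \<Longrightarrow> (\<Sum>j<n. u j * V j) < t"
  shows "sqrt (\<Sum>j<n. (V j)\<^sup>2) \<le> 2 * t"
proof (rule ccontr)
  define nV where "nV = sqrt (\<Sum>j<n. (V j)\<^sup>2)"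
  assume "\<not> sqrt (\<Sum>j<n. (V j)\<^sup>2) \<le> 2 * t"
  then have lt: "2 * t < nV" by (simp add: nV_def)
  have "(\<lambda>_. 0) \<in> half_net n" by (auto simp: half_net_def)
  from small[OF this] have "0 < nV" using lt by simp
  have "(\<Sum>j<n. (V j / nV)\<^sup>2) = 1"
    using \<open>0 < nV\<close> by (simp add: nV_def power_divide sum_nonneg flip: sum_divide_distrib)
  then obtain u where u: "u \<in> half_net n" and half: "1/2 \<le> (\<Sum>j<n. u j * (V j / nV))"
    using half_net_norming[OF assms(1), of "\<lambda>j. V j / nV"] by blast
  have "nV / 2 \<le> nV * (\<Sum>j<n. u j * (V j / nV))"
    using half \<open>0 < nV\<close> by simp
  also have "\<dots> = (\<Sum>j<n. u j * V j)"
    using \<open>0 < nV\<close> by (simp add: sum_distrib_left)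
  finally show False using small[OF u] lt by simp
qed

context subgaussian_law
begin

lemma component_measurable_PiM:
  "q \<in> K \<Longrightarrow> (\<lambda>\<omega>. \<omega> q) \<in> borel_measurable (PiM K (\<lambda>_. D))"
  using measurable_component_singleton[of q K "\<lambda>_. D"] measurable_cong_sets[OF refl sets_D] by blast

end

text \<open>A pair \<open>k = (i, l)\<close> indexes the measurement vector \<open>a\<^sub>i\<^sub>,\<^sub>l\<close>, whose entries are \<open>\<omega> (i, l, j)\<close>.\<close>

locale sensing_model = subgaussian_law +
  fixes m p n :: nat
begin

sublocale subgaussian_product D \<alpha> "{..<m} \<times> {..<p} \<times> {..<n}"
  by unfold_locales simp

definition row_block :: "nat \<times> nat \<Rightarrow> (nat \<times> nat \<times> nat) set" where
  "row_block k = (\<lambda>j. (fst k, snd k, j)) ` {..<n}"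

lemma sum_row_block: "(\<Sum>q\<in>row_block k. f q) = (\<Sum>j<n. f (fst k, snd k, j))"
  unfolding row_block_def by (subst sum.reindex) (auto simp: inj_on_def)

definition projected_deviation ::
    "(nat \<Rightarrow> real) \<Rightarrow> (nat \<Rightarrow> real) \<Rightarrow> (nat \<Rightarrow> real) \<Rightarrow> (nat \<times> nat \<times> nat \<Rightarrow> real) \<Rightarrow> real" where
  "projected_deviation g u x \<omega> = (\<Sum>k\<in>{..<m} \<times> {..<p}. g (fst k) *
     ((\<Sum>j<n. u j * \<omega> (fst k, snd k, j)) * (\<Sum>j<n. x j * \<omega> (fst k, snd k, j)) - (\<Sum>j<n. u j * x j)))"

lemma projected_deviation_measurable: "projected_deviation g u x \<in> borel_measurable M"
  unfolding projected_deviation_def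
  by (intro borel_measurable_sum borel_measurable_times borel_measurable_diff
      borel_measurable_const component_measurable_PiM) auto

lemma row_mgf_le:
  assumes k: "k \<in> {..<m} \<times> {..<p}" and u: "(\<Sum>j<n. (u j)\<^sup>2) \<le> 1" and x: "(\<Sum>j<n. (x j)\<^sup>2) \<le> 1"
    and g: "\<bar>\<gamma>\<bar> \<le> 2" and l: "\<bar>l\<bar> \<le> \<epsilon>"
  shows "integrable M (\<lambda>\<omega>. exp (l * (\<gamma> * ((\<Sum>j<n. u j * \<omega> (fst k, snd k, j)) *
           (\<Sum>j<n. x j * \<omega> (fst k, snd k, j)) - (\<Sum>j<n. u j * x j))))) \<and>
    (\<integral>\<omega>. exp (l * (\<gamma> * ((\<Sum>j<n. u j * \<omega> (fst k, snd k, j)) *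
           (\<Sum>j<n. x j * \<omega> (fst k, snd k, j)) - (\<Sum>j<n. u j * x j)))) \<partial>M) \<le> exp (K\<^sub>2 * l\<^sup>2)"
proof -
  define v where "v q = u (snd (snd q))" for q :: "nat \<times> nat \<times> nat"
  define w where "w q = x (snd (snd q))" for q :: "nat \<times> nat \<times> nat"
  have "row_block k \<subseteq> {..<m} \<times> {..<p} \<times> {..<n}" using k by (auto simp: row_block_def)
  moreover have "(\<Sum>q\<in>row_block k. (v q)\<^sup>2) = (\<Sum>j<n. (u j)\<^sup>2)"
    "(\<Sum>q\<in>row_block k. (w q)\<^sup>2) = (\<Sum>j<n. (x j)\<^sup>2)"
    "(\<Sum>q\<in>row_block k. v q * \<omega> q) = (\<Sum>j<n. u j * \<omega> (fst k, snd k, j))"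
    "(\<Sum>q\<in>row_block k. w q * \<omega> q) = (\<Sum>j<n. x j * \<omega> (fst k, snd k, j))"
    "(\<Sum>q\<in>row_block k. v q * w q) = (\<Sum>j<n. u j * x j)" for \<omega>
    by (simp_all add: sum_row_block v_def w_def)
  ultimately show ?thesis
    using bilinear_form_mgf_le[of "row_block k" v w \<gamma> l] u x g l by simp
qed

lemma projected_deviation_tail:
  assumes pos: "0 < n" "0 < m" "0 < p"
    and u: "(\<Sum>j<n. (u j)\<^sup>2) \<le> 1" and x: "(\<Sum>j<n. (x j)\<^sup>2) \<le> 1" and g: "\<And>i. i < m \<Longrightarrow> \<bar>g i\<bar> \<le> 2"
    and l: "0 < l" "l \<le> \<epsilon>"
  shows "measure M {\<omega> \<in> space M. t \<le> projected_deviation g u x \<omega>} \<le> exp (- l * t + real m * real p * K\<^sub>2 * l\<^sup>2)"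
proof -
  interpret PM: prob_space M by (rule prob_space_PiM_D)
  let ?L = "{..<m} \<times> {..<p}"
  define F where "F k r = exp (l * (g (fst k) * ((\<Sum>j<n. u j * r (fst k, snd k, j)) *
      (\<Sum>j<n. x j * r (fst k, snd k, j)) - (\<Sum>j<n. u j * x j))))"
    for k :: "nat \<times> nat" and r :: "nat \<times> nat \<times> nat \<Rightarrow> real"
  have F_restrict: "F k (restrict \<omega> (row_block k)) = F k \<omega>" for \<omega> k
    unfolding F_def by (intro arg_cong[where f = exp] arg_cong2[where f = "(*)"] refl sum.cong)
      (auto simp: row_block_def)
  have F_measurable: "F k \<in> borel_measurable (PiM (row_block k) (\<lambda>_. D))" for k
  proof -
    have entry: "(\<lambda>r. r (fst k, snd k, j)) \<in> borel_measurable (PiM (row_block k) (\<lambda>_. D))" if "j < n" for j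
      using that by (intro component_measurable_PiM) (auto simp: row_block_def)
    have [measurable]: "(\<lambda>r. \<Sum>j<n. v j * r (fst k, snd k, j)) \<in> borel_measurable (PiM (row_block k) (\<lambda>_. D))"
      for v :: "nat \<Rightarrow> real"
      by (intro borel_measurable_sum borel_measurable_times borel_measurable_const entry) auto
    show ?thesis unfolding F_def by measurable
  qed
  have F_mgf: "integrable M (F k) \<and> (\<integral>\<omega>. F k \<omega> \<partial>M) \<le> exp (K\<^sub>2 * l\<^sup>2)" if "k \<in> ?L" for k
    unfolding F_def using that u x g l by (intro row_mgf_le) auto
  have blocks: "row_block k \<subseteq> {..<m} \<times> {..<p} \<times> {..<n}" if "k \<in> ?L" for k
    using that by (auto simp: row_block_def)
  have disjoint: "disjoint_family_on row_block ?L"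
    by (auto simp: disjoint_family_on_def row_block_def)
  have exp_eq: "exp (l * projected_deviation g u x \<omega>) = (\<Prod>k\<in>?L. F k (restrict \<omega> (row_block k)))" for \<omega>
    unfolding F_restrict unfolding projected_deviation_def F_def by (simp add: sum_distrib_left exp_sum)
  note product = PiM_integral_prod_blocks[OF prob_space_D _ _ blocks disjoint F_measurable]
  have int_exp: "integrable M (\<lambda>\<omega>. exp (l * projected_deviation g u x \<omega>))"
    unfolding exp_eq using pos F_mgf by (intro product(1)) (auto simp: F_restrict)
  have "(\<integral>\<omega>. exp (l * projected_deviation g u x \<omega>) \<partial>M) = (\<Prod>k\<in>?L. \<integral>\<omega>. F k \<omega> \<partial>M)"
    unfolding exp_eq using pos F_mgf by (subst product(2)) (auto simp: F_restrict)
  also have "\<dots> \<le> (\<Prod>k\<in>?L. exp (K\<^sub>2 * l\<^sup>2))"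
    using F_mgf by (intro prod_mono conjI integral_nonneg_AE) (auto simp: F_def)
  also have "\<dots> = exp (real m * real p * K\<^sub>2 * l\<^sup>2)"
    by (simp add: card_cartesian_product mult_ac flip: exp_of_nat_mult)
  finally have mgf: "(\<integral>\<omega>. exp (l * projected_deviation g u x \<omega>) \<partial>M) \<le> exp (real m * real p * K\<^sub>2 * l\<^sup>2)" .
  have "measure M {\<omega> \<in> space M. t \<le> projected_deviation g u x \<omega>}
      \<le> (\<integral>\<omega>. exp (l * projected_deviation g u x \<omega>) \<partial>M) / exp (l * t)"
    by (rule PM.prob_ge_le_mgf[OF projected_deviation_measurable l(1) int_exp])
  also have "\<dots> \<le> exp (real m * real p * K\<^sub>2 * l\<^sup>2) / exp (l * t)"
    by (intro divide_right_mono mgf) simp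
  also have "\<dots> = exp (- l * t + real m * real p * K\<^sub>2 * l\<^sup>2)"
    by (simp add: exp_add flip: exp_diff)
  finally show ?thesis .
qed

end

context sensing_model
begin

definition deviation :: "(nat \<Rightarrow> real) \<Rightarrow> (nat \<Rightarrow> real) \<Rightarrow> (nat \<times> nat \<times> nat \<Rightarrow> real) \<Rightarrow> nat \<Rightarrow> real" where
  "deviation g x \<omega> j = (\<Sum>k\<in>{..<m} \<times> {..<p}.
     g (fst k) * (\<omega> (fst k, snd k, j) * (\<Sum>i<n. x i * \<omega> (fst k, snd k, i)) - x j))"

lemma projected_deviation_eq_sum: "projected_deviation g u x \<omega> = (\<Sum>j<n. u j * deviation g x \<omega> j)"
proof -
  have "projected_deviation g u x \<omega> = (\<Sum>k\<in>{..<m} \<times> {..<p}. \<Sum>j<n. u j * (g (fst k) * (\<omega> (fst k, snd k, j) * (\<Sum>i<n. x i * \<omega> (fst k, snd k, i)) - x j)))"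
    unfolding projected_deviation_def
  proof (rule sum.cong[OF refl])
    fix k :: "nat \<times> nat"
    let ?Z = "\<Sum>i<n. x i * \<omega> (fst k, snd k, i)"
    have "g (fst k) * ((\<Sum>j<n. u j * \<omega> (fst k, snd k, j)) * ?Z - (\<Sum>j<n. u j * x j))
        = g (fst k) * (\<Sum>j<n. u j * (\<omega> (fst k, snd k, j) * ?Z - x j))"
      by (simp add: sum_distrib_right sum_subtractf right_diff_distrib mult_ac)
    also have "\<dots> = (\<Sum>j<n. u j * (g (fst k) * (\<omega> (fst k, snd k, j) * ?Z - x j)))"
      by (simp add: sum_distrib_left mult_ac)
    finally show "g (fst k) * ((\<Sum>j<n. u j * \<omega> (fst k, snd k, j)) * (\<Sum>j<n. x j * \<omega> (fst k, snd k, j)) - (\<Sum>j<n. u j * x j))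
        = (\<Sum>j<n. u j * (g (fst k) * (\<omega> (fst k, snd k, j) * ?Z - x j)))" by (simp add: mult_ac)
  qed
  also have "\<dots> = (\<Sum>j<n. \<Sum>k\<in>{..<m} \<times> {..<p}. u j * (g (fst k) * (\<omega> (fst k, snd k, j) * (\<Sum>i<n. x i * \<omega> (fst k, snd k, i)) - x j)))"
    by (rule sum.swap)
  also have "\<dots> = (\<Sum>j<n. u j * deviation g x \<omega> j)"
    unfolding deviation_def by (simp add: sum_distrib_left)
  finally show ?thesis .
qed

lemma xi0_error_eq_deviation:
  assumes g_sum: "(\<Sum>i<m. g i) = real m" and c: "c \<noteq> 0" and mp_pos: "0 < real m * real p"
  shows "xi0 m p n \<omega> g x j - x j = c / (real m * real p) * deviation g (\<lambda>i. x i / c) \<omega> j"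
proof -
  let ?Z = "\<lambda>i l. \<Sum>k<n. x k / c * \<omega> (i, l, k)"
  have xi0_eq: "xi0 m p n \<omega> g x j = c / (real m * real p) * (\<Sum>i<m. \<Sum>l<p. g i * \<omega> (i, l, j) * ?Z i l)"
  proof -
    have "(\<Sum>k<n. \<omega> (i, l, k) * x k) = c * ?Z i l" for i l
      using c by (simp add: sum_distrib_left field_simps)
    then have "xi0 m p n \<omega> g x j = 1 / (real m * real p) * (\<Sum>l<p. \<Sum>i<m. \<omega> (i, l, j) * (g i * (c * ?Z i l)))"
      by (simp add: xi0_def meas_y_def Amul_def)
    also have "(\<Sum>l<p. \<Sum>i<m. \<omega> (i, l, j) * (g i * (c * ?Z i l))) = c * (\<Sum>i<m. \<Sum>l<p. g i * \<omega> (i, l, j) * ?Z i l)"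
      using c by (subst sum.swap) (simp add: sum_distrib_left mult_ac)
    finally show ?thesis by simp
  qed
  have deviation_eq: "deviation g (\<lambda>i. x i / c) \<omega> j = (\<Sum>i<m. \<Sum>l<p. g i * \<omega> (i, l, j) * ?Z i l) - x j / c * (real m * real p)"
  proof -
    have "deviation g (\<lambda>i. x i / c) \<omega> j = (\<Sum>i<m. \<Sum>l<p. g i * (\<omega> (i, l, j) * ?Z i l - x j / c))"
      unfolding deviation_def by (simp add: sum.cartesian_product split_def)
    also have "\<dots> = (\<Sum>i<m. \<Sum>l<p. g i * \<omega> (i, l, j) * ?Z i l) - (\<Sum>i<m. \<Sum>l<p. g i * (x j / c))"
      by (simp add: right_diff_distrib sum_subtractf mult_ac)
    also have "(\<Sum>i<m. \<Sum>l<p. g i * (x j / c)) = x j / c * (real m * real p)"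
    proof -
      have "(\<Sum>i<m. \<Sum>l<p. g i * (x j / c)) = (\<Sum>i<m. g i * (x j / c * real p))"
        by (intro sum.cong refl) (simp add: mult_ac)
      also have "\<dots> = (\<Sum>i<m. g i) * (x j / c * real p)" by (rule sum_distrib_right[symmetric])
      finally show ?thesis using g_sum by simp
    qed
    finally show ?thesis .
  qed
  have rearrange: "\<And>a S b N. (N::real) \<noteq> 0 \<Longrightarrow> a = c / N * S \<Longrightarrow> a - b = c / N * (S - b / c * N)"
    using c by (simp add: field_simps)
  show ?thesis unfolding deviation_eq by (rule rearrange[OF _ xi0_eq]) (use mp_pos in \<open>simp add: zero_less_mult_iff\<close>)
qed

lemma prob_half_net_deviation_le:
  assumes n: "2 \<le> n" and pos: "0 < m" "0 < p" and g: "\<And>i. i < m \<Longrightarrow> \<bar>g i\<bar> \<le> 2"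
    and x: "(\<Sum>j<n. (x j)\<^sup>2) = 1" and \<delta>: "0 < \<delta>" "\<delta> < 1"
    and e: "0 < e" "e \<le> \<epsilon>" "K\<^sub>2 * e \<le> 1/4"
    and large: "4 * real n * ln (real n) \<le> e * \<delta>\<^sup>2 * (real m * real p) / 8"
  shows "measure M (\<Union>u\<in>half_net n. {\<omega> \<in> space M. \<delta> * (real m * real p) / 2 \<le> projected_deviation g u x \<omega>})
    \<le> exp (- (e / 8) * \<delta>\<^sup>2 * (real m * real p))"
proof -
  interpret PM: prob_space M by (rule prob_space_PiM_D)
  define N where "N = real m * real p"
  have N_pos: "0 < N" using pos by (simp add: N_def)
  have tail: "measure M {\<omega> \<in> space M. \<delta> * N / 2 \<le> projected_deviation g u x \<omega>} \<le> exp (- (e/4) * \<delta>\<^sup>2 * N)"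
    if "u \<in> half_net n" for u
  proof -
    have "e * \<delta> \<le> \<epsilon>" using e \<delta> mult_left_le[of \<delta> e] by linarith
    then have "measure M {\<omega> \<in> space M. \<delta> * N / 2 \<le> projected_deviation g u x \<omega>}
        \<le> exp (- (e * \<delta>) * (\<delta> * N / 2) + N * K\<^sub>2 * (e * \<delta>)\<^sup>2)"
      unfolding N_def using that n pos x g e \<delta>
      by (intro projected_deviation_tail) (auto simp: half_net_def)
    also have "\<dots> \<le> exp (- (e/4) * \<delta>\<^sup>2 * N)"
    proof -
      have "K\<^sub>2 * e * (e * \<delta>\<^sup>2 * N) \<le> 1/4 * (e * \<delta>\<^sup>2 * N)"
        using e \<delta> N_pos by (intro mult_right_mono) auto
      then show ?thesis by (simp add: power2_eq_square algebra_simps)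
    qed
    finally show ?thesis .
  qed
  have "measure M (\<Union>u\<in>half_net n. {\<omega> \<in> space M. \<delta> * N / 2 \<le> projected_deviation g u x \<omega>})
      \<le> (\<Sum>u\<in>half_net n. measure M {\<omega> \<in> space M. \<delta> * N / 2 \<le> projected_deviation g u x \<omega>})"
    using finite_card_half_net projected_deviation_measurable
    by (intro PM.finite_measure_subadditive_finite) auto
  also have "\<dots> \<le> real (card (half_net n)) * exp (- (e/4) * \<delta>\<^sup>2 * N)"
    using sum_mono[of "half_net n", OF tail] by simp
  also have "\<dots> \<le> exp (4 * real n * ln (real n)) * exp (- (e/4) * \<delta>\<^sup>2 * N)"
    by (intro mult_right_mono card_half_net_le_exp n) simp
  also have "\<dots> \<le> exp (- (e / 8) * \<delta>\<^sup>2 * N)"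
    using large by (simp add: N_def flip: exp_add)
  finally show ?thesis by (simp add: N_def)
qed

lemma prob_xi0_error_ge:
  assumes n: "2 \<le> n" and pos: "0 < m" "0 < p" and g: "\<And>i. i < m \<Longrightarrow> \<bar>g i\<bar> \<le> 2"
    and g_sum: "(\<Sum>i<m. g i) = real m" and x: "0 < enorm n x" and \<delta>: "0 < \<delta>" "\<delta> < 1"
    and e: "0 < e" "e \<le> \<epsilon>" "K\<^sub>2 * e \<le> 1/4"
    and large: "4 * real n * ln (real n) \<le> e * \<delta>\<^sup>2 * (real m * real p) / 8"
  shows "1 - exp (- (e / 8) * \<delta>\<^sup>2 * (real m * real p)) \<le>
    measure M {\<omega> \<in> space M. enorm n (\<lambda>j. xi0 m p n \<omega> g x j - x j) \<le> \<delta> * enorm n x}"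
proof -
  interpret PM: prob_space M by (rule prob_space_PiM_D)
  define N where "N = real m * real p"
  define x\<^sub>1 where "x\<^sub>1 j = x j / enorm n x" for j
  define Bad where "Bad = (\<Union>u\<in>half_net n. {\<omega> \<in> space M. \<delta> * N / 2 \<le> projected_deviation g u x\<^sub>1 \<omega>})"
  have N_pos: "0 < N" using pos by (simp add: N_def)
  have "(\<Sum>j<n. (x j)\<^sup>2) = (enorm n x)\<^sup>2" by (simp add: enorm_def sum_nonneg)
  then have x\<^sub>1_unit: "(\<Sum>j<n. (x\<^sub>1 j)\<^sup>2) = 1"
    using x by (simp add: x\<^sub>1_def power_divide flip: sum_divide_distrib)
  have Bad_sets: "Bad \<in> sets M"
    unfolding Bad_def using finite_card_half_net projected_deviation_measurable
    by (intro sets.finite_UN) auto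
  have prob_Bad: "measure M Bad \<le> exp (- (e / 8) * \<delta>\<^sup>2 * N)"
    unfolding Bad_def N_def by (rule prob_half_net_deviation_le[OF n pos g x\<^sub>1_unit \<delta> e large])
  have xi0_measurable: "(\<lambda>\<omega>. xi0 m p n \<omega> g x j) \<in> borel_measurable M" if "j < n" for j
    unfolding xi0_def meas_y_def Amul_def using that
    by (intro borel_measurable_times borel_measurable_sum borel_measurable_const component_measurable_PiM) auto
  have "(\<lambda>\<omega>. \<Sum>j<n. (xi0 m p n \<omega> g x j - x j)\<^sup>2) \<in> borel_measurable M"
    by (intro borel_measurable_sum borel_measurable_power borel_measurable_diff
        borel_measurable_const xi0_measurable) auto
  then have "(\<lambda>\<omega>. enorm n (\<lambda>j. xi0 m p n \<omega> g x j - x j)) \<in> borel_measurable M"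
    unfolding enorm_def using measurable_compose[OF _ borel_measurable_sqrt] by (simp add: comp_def)
  then have good_sets: "{\<omega> \<in> space M. enorm n (\<lambda>j. xi0 m p n \<omega> g x j - x j) \<le> \<delta> * enorm n x} \<in> sets M"
    by measurable
  have "space M - Bad \<subseteq> {\<omega> \<in> space M. enorm n (\<lambda>j. xi0 m p n \<omega> g x j - x j) \<le> \<delta> * enorm n x}"
  proof safe
    fix \<omega> assume \<omega>: "\<omega> \<in> space M" "\<omega> \<notin> Bad"
    have dev_le: "sqrt (\<Sum>j<n. (deviation g x\<^sub>1 \<omega> j)\<^sup>2) \<le> 2 * (\<delta> * N / 2)"
      using n \<omega> by (intro norm_le_of_half_net) (auto simp: Bad_def not_le projected_deviation_eq_sum)
    have error_eq: "xi0 m p n \<omega> g x j - x j = enorm n x / N * deviation g x\<^sub>1 \<omega> j" for j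
      unfolding x\<^sub>1_def N_def using g_sum x N_pos N_def by (intro xi0_error_eq_deviation) auto
    have "enorm n (\<lambda>j. xi0 m p n \<omega> g x j - x j)
        = sqrt (\<Sum>j<n. (enorm n x / N)\<^sup>2 * (deviation g x\<^sub>1 \<omega> j)\<^sup>2)"
      unfolding error_eq enorm_def[of n "\<lambda>j. enorm n x / N * deviation g x\<^sub>1 \<omega> j"]
      by (simp only: power_mult_distrib)
    also have "\<dots> = enorm n x / N * sqrt (\<Sum>j<n. (deviation g x\<^sub>1 \<omega> j)\<^sup>2)"
      using x N_pos by (simp add: real_sqrt_mult flip: sum_distrib_left)
    also have "\<dots> \<le> enorm n x / N * (\<delta> * N)"
      using dev_le x N_pos by (intro mult_left_mono) auto
    finally show "enorm n (\<lambda>j. xi0 m p n \<omega> g x j - x j) \<le> \<delta> * enorm n x"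
      using N_pos by (simp add: mult.commute)
  qed
  then have "measure M (space M - Bad) \<le> measure M {\<omega> \<in> space M. enorm n (\<lambda>j. xi0 m p n \<omega> g x j - x j) \<le> \<delta> * enorm n x}"
    by (rule PM.finite_measure_mono[OF _ good_sets])
  moreover have "measure M (space M - Bad) = 1 - measure M Bad"
    using Bad_sets by (simp add: PM.prob_compl)
  ultimately show ?thesis using prob_Bad by (simp add: N_def)
qed

end

lemma infnorm_one_minus_gain_le:
  assumes "g \<in> Gset m \<rho>" and "0 \<le> \<rho>"
  shows "infnorm m (\<lambda>i. 1 - g i) \<le> \<rho>"
  using assms unfolding infnorm_def Gset_def by (subst Max_le_iff) (auto simp: abs_minus_commute)

lemma initial_pair_in_Dset:
  assumes g: "g \<in> Gset m \<rho>" and "0 \<le> \<rho>"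
    and error: "enorm n (\<lambda>j. \<xi> j - x j) \<le> \<delta> * enorm n x"
  shows "(\<xi>, (\<lambda>_. 1)) \<in> Dset n m x g (sqrt (\<delta>\<^sup>2 + \<rho>\<^sup>2)) \<rho>"
proof -
  have gain_sq: "(enorm m (\<lambda>i. 1 - g i))\<^sup>2 \<le> real m * \<rho>\<^sup>2"
  proof -
    have "(enorm m (\<lambda>i. 1 - g i))\<^sup>2 = (\<Sum>i<m. \<bar>1 - g i\<bar>\<^sup>2)" by (simp add: enorm_def sum_nonneg)
    also have "\<dots> \<le> (\<Sum>i<m. \<rho>\<^sup>2)"
      using g by (intro sum_mono power_mono) (auto simp: Gset_def abs_minus_commute)
    finally show ?thesis by simp
  qed
  have "(enorm n x)\<^sup>2 / real m * (enorm m (\<lambda>i. 1 - g i))\<^sup>2 \<le> (enorm n x)\<^sup>2 / real m * (real m * \<rho>\<^sup>2)"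
    by (intro mult_left_mono gain_sq) auto
  also have "\<dots> \<le> \<rho>\<^sup>2 * (enorm n x)\<^sup>2" by (cases "m = 0") auto
  finally have "(enorm n x)\<^sup>2 / real m * (enorm m (\<lambda>i. 1 - g i))\<^sup>2 \<le> \<rho>\<^sup>2 * (enorm n x)\<^sup>2" .
  moreover have "(enorm n (\<lambda>j. \<xi> j - x j))\<^sup>2 \<le> (\<delta> * enorm n x)\<^sup>2"
    using error by (intro power_mono) (auto simp: enorm_def sum_nonneg)
  ultimately have "Delta n m x g \<xi> (\<lambda>_. 1) \<le> (\<delta>\<^sup>2 + \<rho>\<^sup>2) * (enorm n x)\<^sup>2"
    unfolding Delta_def by (simp add: power_mult_distrib algebra_simps)
  moreover have "(\<lambda>_. 1) \<in> Gset m \<rho>" using \<open>0 \<le> \<rho>\<close> by (simp add: Gset_def)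
  ultimately show ?thesis by (simp add: Dset_def)
qed

lemma enorm_pos_iff: "0 < enorm n x \<longleftrightarrow> (\<exists>j<n. x j \<noteq> 0)"
proof -
  have "(\<Sum>j<n. (x j)\<^sup>2) = 0 \<longleftrightarrow> (\<forall>j<n. x j = 0)" by (simp add: sum_nonneg_eq_0_iff) blast
  moreover have "0 \<le> (\<Sum>j<n. (x j)\<^sup>2)" by (simp add: sum_nonneg)
  ultimately show ?thesis unfolding enorm_def by (auto simp: less_le)
qed

lemma dimension_one_sample_size:
  assumes "n \<ge> C' * t * ln (real m * real p)" and "n = 1" and "4 \<le> C'" and "1 \<le> t"
    and "0 < m" "0 < p"
  shows "real m * real p = 1"
proof (rule ccontr)
  assume "real m * real p \<noteq> 1"
  then have "m * p \<noteq> 1" by (metis of_nat_1 of_nat_mult)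
  moreover have "1 \<le> m * p" using assms(5,6) by simp
  ultimately have "2 \<le> m * p" by linarith
  then have "2 \<le> real m * real p" by (metis of_nat_le_iff of_nat_mult of_nat_numeral)
  then have "ln 2 \<le> ln (real m * real p)" by simp
  moreover have "1/2 \<le> ln (2::real)"
    using ln_le_minus_one[of "1/2::real"] by (simp add: ln_div)
  ultimately have "4 * 1 * (1/2) \<le> C' * t * ln (real m * real p)"
    using assms(3,4) by (intro mult_mono) auto
  then show False using assms(1,2) by simp
qed

lemma sample_size_consequences:
  fixes e C' \<delta> :: real
  assumes n: "1 \<le> n" and \<delta>: "0 < \<delta>" "\<delta> < 1" and e: "0 < e" and C': "4 \<le> C'" "32 / e \<le> C'"
    and samples: "real m * real p \<ge> C' * \<delta> powr (-2) * (real n + real m) * ln (real n / \<delta>)"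
  shows "0 < m" and "0 < p" and "4 * real n * ln (real n) \<le> e * \<delta>\<^sup>2 * (real m * real p) / 8"
proof -
  have n_div: "real n \<le> real n / \<delta>" using n \<delta> by (simp add: field_simps)
  then have ln_pos: "0 < ln (real n / \<delta>)" using n \<delta> by simp
  have "C' * (real n + real m) * ln (real n / \<delta>) / \<delta>\<^sup>2 \<le> real m * real p"
    using samples \<delta> by (simp add: powr_minus divide_inverse mult_ac)
  then have samples': "C' * (real n + real m) * ln (real n / \<delta>) \<le> (real m * real p) * \<delta>\<^sup>2"
    using \<delta> by (simp add: divide_le_eq)
  moreover have "0 < C' * (real n + real m) * ln (real n / \<delta>)"
    using C' n ln_pos by (intro mult_pos_pos) auto
  ultimately have "0 < (real m * real p) * \<delta>\<^sup>2" by linarith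
  then show "0 < m" "0 < p" using \<delta> by (simp_all add: zero_less_mult_iff)
  show "4 * real n * ln (real n) \<le> e * \<delta>\<^sup>2 * (real m * real p) / 8"
  proof -
    have "ln (real n) \<le> ln (real n / \<delta>)" using n_div n by simp
    then have "32 / e * real n * ln (real n) \<le> C' * (real n + real m) * ln (real n / \<delta>)"
      using C' e n by (intro mult_mono) auto
    then have "e / 8 * (32 / e * real n * ln (real n)) \<le> e / 8 * ((real m * real p) * \<delta>\<^sup>2)"
      using samples' e by (intro mult_left_mono) auto
    then show ?thesis using e by (simp add: field_simps)
  qed
qed

lemma xi0_initialisation_prob_ge:
  assumes law: "subgaussian_law D \<alpha>"
    and x: "\<exists>j<n. x j \<noteq> 0" and \<rho>: "0 \<le> \<rho>" "\<rho> < 1" and g: "g \<in> Gset m \<rho>"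
    and \<delta>: "0 < \<delta>" "\<delta> < 1" and t: "1 \<le> t"
    and e: "0 < e" "e \<le> bilin_mgf_radius \<alpha>" "bilin_mgf_const \<alpha> * e \<le> 1/4"
    and C': "4 \<le> C'" "32 / e \<le> C'"
    and samples: "real m * real p \<ge> C' * \<delta> powr (-2) * (real n + real m) * ln (real n / \<delta>)"
    and dim: "real n \<ge> C' * t * ln (real m * real p)"
  shows "measure (sample_space m p n D)
      {\<omega> \<in> space (sample_space m p n D).
         enorm n (\<lambda>j. xi0 m p n \<omega> g x j - x j) \<le> \<delta> * enorm n x \<and>
         infnorm m (\<lambda>i. 1 - g i) \<le> \<rho> \<and>
         (xi0 m p n \<omega> g x, (\<lambda>_. 1)) \<in> Dset n m x g (sqrt (\<delta>\<^sup>2 + \<rho>\<^sup>2)) \<rho>}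
    \<ge> 1 - 1 * exp (- (e / 8) * \<delta>\<^sup>2 * real m * real p) - (real m * real p) powr (- t)"
proof -
  interpret sensing_model D \<alpha> m p n using law by (simp add: sensing_model_def)
  have n: "1 \<le> n" using x by auto
  obtain "0 < m" "0 < p" and large: "4 * real n * ln (real n) \<le> e * \<delta>\<^sup>2 * (real m * real p) / 8"
    using sample_size_consequences[OF n \<delta> e(1) C' samples] by blast
  have gain_bound: "\<bar>g i\<bar> \<le> 2" if "i < m" for i using g \<rho> that by (force simp: Gset_def)
  have gain_sum: "(\<Sum>i<m. g i) = real m" using g by (simp add: Gset_def sum_subtractf)
  have error_prob: "1 - exp (- (e / 8) * \<delta>\<^sup>2 * real m * real p) - (real m * real p) powr (- t)
      \<le> measure M {\<omega> \<in> space M. enorm n (\<lambda>j. xi0 m p n \<omega> g x j - x j) \<le> \<delta> * enorm n x}"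
  proof (cases "n = 1")
    case True
    then have "real m * real p = 1"
      using dimension_one_sample_size[OF dim _ C'(1) t \<open>0 < m\<close> \<open>0 < p\<close>] by simp
    then have "1 - exp (- (e / 8) * \<delta>\<^sup>2 * real m * real p) - (real m * real p) powr (- t) \<le> 0"
      by simp
    then show ?thesis using measure_nonneg order_trans by blast
  next
    case False
    then have "2 \<le> n" using n by simp
    moreover have "0 < enorm n x" using x by (simp add: enorm_pos_iff)
    ultimately have "1 - exp (- (e / 8) * \<delta>\<^sup>2 * (real m * real p))
        \<le> measure M {\<omega> \<in> space M. enorm n (\<lambda>j. xi0 m p n \<omega> g x j - x j) \<le> \<delta> * enorm n x}"
      using \<open>0 < m\<close> \<open>0 < p\<close> gain_bound gain_sum \<delta> e large by (intro prob_xi0_error_ge) auto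
    moreover have "0 \<le> (real m * real p) powr (- t)" by simp
    moreover have "exp (- (e / 8) * \<delta>\<^sup>2 * real m * real p) = exp (- (e / 8) * \<delta>\<^sup>2 * (real m * real p))"
      by (simp add: mult.assoc)
    ultimately show ?thesis by linarith
  qed
  have event_eq: "{\<omega> \<in> space (sample_space m p n D).
         enorm n (\<lambda>j. xi0 m p n \<omega> g x j - x j) \<le> \<delta> * enorm n x \<and>
         infnorm m (\<lambda>i. 1 - g i) \<le> \<rho> \<and>
         (xi0 m p n \<omega> g x, (\<lambda>_. 1)) \<in> Dset n m x g (sqrt (\<delta>\<^sup>2 + \<rho>\<^sup>2)) \<rho>}
      = {\<omega> \<in> space M. enorm n (\<lambda>j. xi0 m p n \<omega> g x j - x j) \<le> \<delta> * enorm n x}"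
    using infnorm_one_minus_gain_le[OF g \<rho>(1)] initial_pair_in_Dset[OF g \<rho>(1)]
    unfolding sample_space_def by blast
  show ?thesis
    using error_prob unfolding event_eq[unfolded sample_space_def] sample_space_def by linarith
qed

theorem mainTheorem4:
  fixes \<alpha> c0 :: real
  assumes "\<alpha> > 0" and "c0 > 0"
  shows "\<exists>C' C c :: real. C' > 0 \<and> C > 0 \<and> c > 0 \<and>
    (\<forall>(D :: real measure) (n :: nat) (m :: nat) (p :: nat) (x :: nat \<Rightarrow> real)
        (\<rho> :: real) (g :: nat \<Rightarrow> real) (\<delta> :: real) (t :: real).
      prob_space D \<and> sets D = sets borel \<and>
      integrable D (\<lambda>u. u) \<and> (\<integral>u. u \<partial>D) = 0 \<and>
      integrable D (\<lambda>u. u\<^sup>2) \<and> (\<integral>u. u\<^sup>2 \<partial>D) = 1 \<and>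
      subgauss_norm_eq D \<alpha> \<and>
      (\<exists>j<n. x j \<noteq> 0) \<and>
      ((\<integral>u. u ^ 4 \<partial>D) = 1 \<longrightarrow>
         n > 1 \<and> norm4_pow4 n (\<lambda>j. x j / enorm n x) \<le> 1 - c0 / real n) \<and>
      0 \<le> \<rho> \<and> \<rho> < 1 \<and> g \<in> Gset m \<rho> \<and>
      0 < \<delta> \<and> \<delta> < 1 \<and> t \<ge> 1 \<and>
      real m * real p \<ge> C' * \<delta> powr (-2) * (real n + real m) * ln (real n / \<delta>) \<and>
      real n \<ge> C' * t * ln (real m * real p)
      \<longrightarrow>
      measure (sample_space m p n D)
        {\<omega> \<in> space (sample_space m p n D).
           enorm n (\<lambda>j. xi0 m p n \<omega> g x j - x j) \<le> \<delta> * enorm n x \<and>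
           infnorm m (\<lambda>i. 1 - g i) \<le> \<rho> \<and>
           (xi0 m p n \<omega> g x, (\<lambda>_. 1)) \<in> Dset n m x g (sqrt (\<delta>\<^sup>2 + \<rho>\<^sup>2)) \<rho>}
      \<ge> 1 - C * exp (- c * \<delta>\<^sup>2 * real m * real p) - (real m * real p) powr (- t))"
proof -
  define e where "e = min (bilin_mgf_radius \<alpha>) (1 / (4 * bilin_mgf_const \<alpha>))"
  have K\<^sub>2_pos: "0 < bilin_mgf_const \<alpha>" by (rule bilin_mgf_const_pos[OF assms(1)])
  have e_pos: "0 < e" using bilin_mgf_radius_pos[OF assms(1)] K\<^sub>2_pos by (simp add: e_def)
  have e_le: "e \<le> bilin_mgf_radius \<alpha>" by (simp add: e_def)
  have "bilin_mgf_const \<alpha> * e \<le> bilin_mgf_const \<alpha> * (1 / (4 * bilin_mgf_const \<alpha>))"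
    using K\<^sub>2_pos by (intro mult_left_mono) (auto simp: e_def)
  then have e_small: "bilin_mgf_const \<alpha> * e \<le> 1/4" using K\<^sub>2_pos by simp
  show ?thesis
    apply (rule exI[of _ "4 + 32 / e"], rule exI[of _ 1], rule exI[of _ "e / 8"])
    apply (intro conjI allI impI)
    subgoal using e_pos by (intro add_pos_pos) auto
    subgoal by simp
    subgoal using e_pos by simp
    subgoal
      by (elim conjE, rule xi0_initialisation_prob_ge)
        (use e_pos e_le e_small assms(1) in \<open>simp_all add: subgaussian_law_def\<close>)
    done
qed

end
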